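(* Let $n\ge3$, $1\le j\le n-1$, $A\in\mathrm{GL}(n)$, and let $K$ and $L$ be origin-symmetric convex bodies with non-empty interior in $\mathbb{R}^n$. If $K$ is the $j$-projection body of $L$, then $AK$ is the $j$-projection body of $|\det A|^{\frac{1}{n-j}}A^{-\mathrm{T}}L$. In particular, the class of $j$-projection bodies is $\mathrm{GL}(n)$ invariant.
   Context: $K$ is called the $j$-projection body of $L$ if $\mathrm{vol}_j(K|E^\perp)=\mathrm{vol}_{n-j}(L|E)$ for every $(n-j)$-dimensional linear subspace $E$ of $\mathbb{R}^n$, where $K|E$ denotes orthogonal projection onto $E$. The class of $j$-projection bodies is the closure in the Hausdorff metric of the set of all $j$-projection bodies of origin-symmetric convex bodies with non-empty interior. $A^{-\mathrm{T}}$ is the inverse transpose of $A$. *)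

theory Defs
  imports "HOL-Analysis.Analysis"
begin

definition convex_body :: "'a::euclidean_space set \<Rightarrow> bool" where
  "convex_body K \<longleftrightarrow> compact K \<and> convex K \<and> K \<noteq> {}"

definition origin_symmetric :: "'a::real_vector set \<Rightarrow> bool" where
  "origin_symmetric K \<longleftrightarrow> (\<forall>x\<in>K. - x \<in> K)"

definition proj_onto :: "'a::real_inner set \<Rightarrow> 'a set \<Rightarrow> 'a set" where
  "proj_onto K E = {p \<in> E. \<exists>x\<in>K. \<forall>e\<in>E. inner (x - p) e = 0}"

definition orthonormal_basis_of :: "'a::euclidean_space set \<Rightarrow> nat \<Rightarrow> (nat \<Rightarrow> 'a) \<Rightarrow> bool" where
  "orthonormal_basis_of F k b \<longleftrightarrow>
     (\<forall>i<k. \<forall>l<k. inner (b i) (b l) = (if i = l then 1 else 0)) \<and> span (b ` {..<k}) = F"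

text \<open>The (dim F)-dimensional volume of a set X contained in the linear subspace F:
  Lebesgue measure on R^k (k = dim F) of the preimage of X under the linear isometry
  R^k -> F given by an orthonormal basis of F.\<close>
definition subspace_volume :: "'a::euclidean_space set \<Rightarrow> 'a set \<Rightarrow> real" where
  "subspace_volume F X =
     (let k = dim F; b = (SOME b. orthonormal_basis_of F k b) in
      measure (PiM {..<k} (\<lambda>_. lborel))
        ((\<lambda>x. \<Sum>i<k. x i *\<^sub>R b i) -` X \<inter> space (PiM {..<k} (\<lambda>_. lborel))))"

definition is_j_projection_body :: "nat \<Rightarrow> 'a::euclidean_space set \<Rightarrow> 'a set \<Rightarrow> bool" where
  "is_j_projection_body j K L \<longleftrightarrow>
     (\<forall>E. subspace E \<and> dim E = DIM('a) - j \<longrightarrow>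
        subspace_volume (orthogonal_comp E) (proj_onto K (orthogonal_comp E)) =
        subspace_volume E (proj_onto L E))"

definition hausdorff_dist :: "'a::metric_space set \<Rightarrow> 'a set \<Rightarrow> real" where
  "hausdorff_dist S T = max (SUP x\<in>S. infdist x T) (SUP y\<in>T. infdist y S)"

text \<open>The class of j-projection bodies: Hausdorff closure (within nonempty compact sets) of
  the set of j-projection bodies of origin-symmetric convex bodies with non-empty interior.\<close>
definition j_projection_class :: "nat \<Rightarrow> 'a::euclidean_space set set" where
  "j_projection_class j =
     (let P = {K. convex_body K \<and> origin_symmetric K \<and>
                  (\<exists>L. convex_body L \<and> origin_symmetric L \<and> interior L \<noteq> {} \<and>
                       is_j_projection_body j K L)}
      in {C. compact C \<and> C \<noteq> {} \<and>
             (\<exists>X. (\<forall>i::nat. X i \<in> P) \<and> (\<lambda>i. hausdorff_dist (X i) C) \<longlonglongrightarrow> 0)})"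

end

theory Submission
  imports Defs
begin

text \<open>
  Fix a subspace \<open>E\<close> of dimension \<open>n - j\<close>, let \<open>F = E\<^sup>\<bottom>\<close> and \<open>G = A\<^sup>T F\<close>, and write
  \<open>P\<^sub>V\<close> for orthogonal projection onto \<open>V\<close>. Since \<open>A G\<^sup>\<bottom> = E\<close> and \<open>A\<^sup>-\<^sup>T G = F\<close>, the
  projections factor as \<open>(A K)|F = T (K|G)\<close> and \<open>(A\<^sup>-\<^sup>T L)|E = T' (L|G\<^sup>\<bottom>)\<close> with
  \<open>T = P\<^sub>F A : G \<rightarrow> F\<close> and \<open>T' = P\<^sub>E A\<^sup>-\<^sup>T : G\<^sup>\<bottom> \<rightarrow> E\<close>, and the hypothesis applied to the
  \<open>(n - j)\<close>-dimensional space \<open>G\<^sup>\<bottom>\<close> gives \<open>vol(K|G) = vol(L|G\<^sup>\<bottom>)\<close>. It remains to compare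
  the factors by which \<open>T\<close> and \<open>T'\<close> scale volume. Deleting the block \<open>P\<^sub>E A P\<^sub>G\<close> from \<open>A\<close>
  is a square-zero perturbation, so it keeps \<open>|det A|\<close>, and for a map that is block diagonal
  for \<open>G \<oplus> G\<^sup>\<bottom> \<rightarrow> F \<oplus> E\<close> the two block factors multiply to \<open>|det|\<close>; hence
  \<open>factor T \<cdot> factor (A|G\<^sup>\<bottom>) = |det A|\<close>. Moreover \<open>T'\<close> inverts \<open>P\<^sub>G\<^sub>\<bottom> A\<^sup>T : E \<rightarrow> G\<^sup>\<bottom>\<close>,
  the adjoint of \<open>A|G\<^sup>\<bottom>\<close>, and adjoints scale volume alike, so
  \<open>factor T = |det A| \<cdot> factor T'\<close>. Scaling by \<open>|det A| powr (1 / (n - j))\<close> multiplies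
  volumes in \<open>E\<close> by exactly \<open>|det A|\<close>. The class is invariant because linear maps are
  Lipschitz for the Hausdorff distance.
\<close>

section \<open>Lebesgue measure of linear images\<close>

lemma abs_det_involution:
  fixes J :: "real^'n \<Rightarrow> real^'n"
  assumes "linear J" and "\<And>x. J (J x) = x"
  shows "\<bar>det (matrix J)\<bar> = 1"
proof -
  have "J \<circ> J = id" using assms(2) by auto
  then have "det (matrix J) * det (matrix J) = 1"
    using matrix_compose[OF assms(1) assms(1)] by (metis det_I det_mul matrix_id_mat_1)
  then show ?thesis by (auto simp: square_eq_1_iff)
qed

lemma measure_swap_coordinates_cbox:
  "measure lebesgue ((\<lambda>x::real^'n. \<chi> i. x $ Transposition.transpose m n i) ` cbox a b)
     = measure lebesgue (cbox a b)"
proof (cases "cbox a b = {}")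
  case False
  let ?f = "\<lambda>x::real^'n. \<chi> i. x $ Transposition.transpose m n i"
  have box: "?f ` cbox a b = cbox (?f a) (?f b)"
    by (auto simp: image_iff lambda_swap_Galois mem_box_cart) (metis transpose_involutory)+
  with False have "cbox (?f a) (?f b) \<noteq> {}" by (metis image_is_empty)
  with False show ?thesis
    using prod.permute[OF permutes_swap_id[of m UNIV n], of "\<lambda>i. b $ i - a $ i"]
    by (simp add: box content_cbox_cart o_def)
qed simp

lemma measure_shear_cbox:
  fixes a b :: "real^'n"
  assumes "m \<noteq> n"
  shows "measure lebesgue ((\<lambda>x. \<chi> i. if i = m then x $ m + x $ n else x $ i) ` cbox a b)
       = measure lebesgue (cbox a b)"
proof (cases "cbox a b = {}")
  case False
  let ?f = "\<lambda>x::real^'n. \<chi> i. if i = m then x $ m + x $ n else x $ i"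
  have lin: "linear ?f" by (rule linearI) (simp_all add: vec_eq_iff algebra_simps)
  \<comment> \<open>\<open>measure_shear_interval\<close> wants a box whose \<open>n\<close>-th lower corner is nonnegative.\<close>
  define t where "t = axis n (a $ n)"
  have "?f ` cbox a b = (+) (?f t) ` ?f ` cbox (a - t) (b - t)"
    using cbox_translation[of t "a - t" "b - t"]
    by (simp add: image_comp o_def linear_add[OF lin])
  then have "measure lebesgue (?f ` cbox a b) = measure lebesgue (?f ` cbox (a - t) (b - t))"
    by (simp add: measure_translation)
  also have "\<dots> = measure lebesgue (cbox (a - t) (b - t))"
    using False assms
    by (intro measure_shear_interval) (auto simp: t_def box_ne_empty inner_diff_left)
  also have "\<dots> = measure lebesgue (cbox a b)"
    using cbox_translation[of t "a - t" "b - t"] by (simp add: measure_translation)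
  finally show ?thesis .
qed simp

lemma det_shear:
  assumes "m \<noteq> n"
  shows "det (matrix (\<lambda>x::real^'n. \<chi> i. if i = m then x $ m + x $ n else x $ i)) = 1"
proof -
  have "matrix (\<lambda>x::real^'n. \<chi> i. if i = m then x $ m + x $ n else x $ i)
      = (\<chi> k. if k = m then row m (mat 1) + 1 *s row n (mat 1) else row k (mat 1))"
    using assms by (auto simp: matrix_def vec_eq_iff row_def mat_def axis_def)
  then show ?thesis
    using det_row_operation[OF assms, of "mat 1" 1] by simp
qed

(* Change_Of_Vars proves this only for index types of class wellorder. *)
lemma measure_linear_image_cart:
  fixes f :: "real^'n \<Rightarrow> real^'n"
  assumes "linear f" and "S \<in> lmeasurable"
  shows "measure lebesgue (f ` S) = \<bar>det (matrix f)\<bar> * measure lebesgue S"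
proof -
  let ?P = "\<lambda>f. \<forall>S \<in> lmeasurable. f ` S \<in> lmeasurable \<and>
              measure lebesgue (f ` S) = \<bar>det (matrix f)\<bar> * measure lebesgue S"
  have from_boxes: "?P f" if "linear f"
    and "\<And>a b. measure lebesgue (f ` cbox a b) = \<bar>det (matrix f)\<bar> * measure lebesgue (cbox a b)"
    for f :: "real^'n \<Rightarrow> real^'n"
    using measure_linear_sufficient[OF that(1) _ that(2)] by auto
  have "?P f"
  proof (rule induct_linear_elementary[OF assms(1)])
    fix f g :: "real^'n \<Rightarrow> real^'n"
    assume "linear f" "linear g" "?P f" "?P g"
    show "?P (f \<circ> g)"
    proof
      fix S :: "(real^'n) set"
      assume "S \<in> lmeasurable"
      with \<open>?P g\<close> have "g ` S \<in> lmeasurable"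
        and "measure lebesgue (g ` S) = \<bar>det (matrix g)\<bar> * measure lebesgue S"
        by auto
      with \<open>?P f\<close> show "(f \<circ> g) ` S \<in> lmeasurable \<and>
          measure lebesgue ((f \<circ> g) ` S) = \<bar>det (matrix (f \<circ> g))\<bar> * measure lebesgue S"
        unfolding image_comp[symmetric] matrix_compose[OF \<open>linear g\<close> \<open>linear f\<close>]
        by (simp add: det_mul abs_mult del: image_image)
    qed
  next
    fix f :: "real^'n \<Rightarrow> real^'n" and i
    assume f: "linear f" "\<And>x. f x $ i = 0"
    then have "\<not> surj f" by (metis one_neq_zero surjE vec_component)
    then have "\<not> inj f" using f(1) linear_injective_imp_surjective by blast
    then have "det (matrix f) = 0" "negligible (f ` S)" for S
      using det_nz_iff_inj[OF f(1)] negligible_linear_singular_image[OF f(1)] by auto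
    then show "?P f"
      by (simp add: negligible_imp_measurable negligible_imp_measure0)
  next
    fix c :: "'n \<Rightarrow> real"
    show "?P (\<lambda>x. \<chi> i. c i * x $ i)"
      by (simp add: measurable_stretch measure_stretch matrix_def axis_def det_diagonal)
  next
    fix m n :: 'n
    have "linear (\<lambda>x::real^'n. \<chi> i. x $ Transposition.transpose m n i)"
      by (rule linearI) (simp_all add: vec_eq_iff)
    then show "?P (\<lambda>x. \<chi> i. x $ Transposition.transpose m n i)"
      by (intro from_boxes) (simp_all add: abs_det_involution measure_swap_coordinates_cbox)
  next
    fix m n :: 'n
    assume "m \<noteq> n"
    have "linear (\<lambda>x::real^'n. \<chi> i. if i = m then x $ m + x $ n else x $ i)"
      by (rule linearI) (simp_all add: vec_eq_iff algebra_simps)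
    then show "?P (\<lambda>x. \<chi> i. if i = m then x $ m + x $ n else x $ i)"
      by (intro from_boxes) (simp_all add: \<open>m \<noteq> n\<close> det_shear measure_shear_cbox)
  qed
  then show ?thesis using assms(2) by blast
qed

section \<open>Orthogonal projection onto a subspace\<close>

lemma orthogonal_compD: "z \<in> orthogonal_comp F \<Longrightarrow> y \<in> F \<Longrightarrow> y \<bullet> z = 0"
  by (auto simp: orthogonal_comp_def orthogonal_def)

lemma orthogonal_compI: "(\<And>y. y \<in> F \<Longrightarrow> y \<bullet> z = 0) \<Longrightarrow> z \<in> orthogonal_comp F"
  by (auto simp: orthogonal_comp_def orthogonal_def)

lemma orthogonal_comp_decomp_unique:
  fixes F :: "'a::euclidean_space set"
  assumes "subspace F" "p \<in> F" "x \<in> F" "q \<in> orthogonal_comp F" "z \<in> orthogonal_comp F"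
    and "p + q = x + z"
  shows "p = x \<and> q = z"
proof -
  have "p - x = z - q" using assms(6) by (simp add: algebra_simps)
  moreover have "p - x \<in> F" "z - q \<in> orthogonal_comp F"
    using assms(1-5) by (simp_all add: subspace_diff subspace_orthogonal_comp)
  ultimately have "p - x \<in> F \<inter> orthogonal_comp F" by simp
  then have "p - x = 0" using orthogonal_Int_0[OF assms(1)] by blast
  then show ?thesis using assms(6) by simp
qed

definition orth_proj :: "'a::euclidean_space set \<Rightarrow> 'a \<Rightarrow> 'a" where
  "orth_proj F x = (THE p. p \<in> F \<and> x - p \<in> orthogonal_comp F)"

context
  fixes F :: "'a::euclidean_space set"
  assumes F: "subspace F"
begin

lemma orth_proj_ex1: "\<exists>!p. p \<in> F \<and> x - p \<in> orthogonal_comp F"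
proof -
  obtain p q where "p \<in> F" "q \<in> orthogonal_comp F" "x = p + q"
    using subspace_sum_orthogonal_comp[OF F] by (metis UNIV_I set_plus_elim)
  then show ?thesis
    using orthogonal_comp_decomp_unique[OF F] by (intro ex1I[of _ p]) force+
qed

lemma orth_proj_in: "orth_proj F x \<in> F"
  and orth_proj_diff: "x - orth_proj F x \<in> orthogonal_comp F"
  using theI'[OF orth_proj_ex1] by (auto simp: orth_proj_def)

lemma orth_proj_eqI: "p \<in> F \<Longrightarrow> x - p \<in> orthogonal_comp F \<Longrightarrow> orth_proj F x = p"
  using orth_proj_ex1 orth_proj_in orth_proj_diff by blast

lemma orth_proj_id: "x \<in> F \<Longrightarrow> orth_proj F x = x"
  by (rule orth_proj_eqI) (simp_all add: subspace_0[OF subspace_orthogonal_comp])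

lemma orth_proj_eq_0: "x \<in> orthogonal_comp F \<Longrightarrow> orth_proj F x = 0"
  by (rule orth_proj_eqI) (simp_all add: subspace_0[OF F])

lemma linear_orth_proj: "linear (orth_proj F)"
proof (rule linearI)
  fix x y
  show "orth_proj F (x + y) = orth_proj F x + orth_proj F y"
    using subspace_add[OF subspace_orthogonal_comp orth_proj_diff orth_proj_diff, of x y]
    by (intro orth_proj_eqI) (simp_all add: subspace_add[OF F] orth_proj_in algebra_simps)
next
  fix c x
  show "orth_proj F (c *\<^sub>R x) = c *\<^sub>R orth_proj F x"
    using subspace_scale[OF subspace_orthogonal_comp orth_proj_diff, of c x]
    by (intro orth_proj_eqI) (simp_all add: subspace_scale[OF F] orth_proj_in algebra_simps)
qed

lemma proj_onto_eq_image: "proj_onto K F = orth_proj F ` K"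
proof (intro set_eqI iffI)
  fix p assume "p \<in> proj_onto K F"
  then obtain x where "p \<in> F" "x \<in> K" "\<forall>e\<in>F. (x - p) \<bullet> e = 0"
    by (auto simp: proj_onto_def)
  then show "p \<in> orth_proj F ` K"
    by (metis image_eqI orth_proj_eqI orthogonal_compI inner_commute)
next
  fix p assume "p \<in> orth_proj F ` K"
  then show "p \<in> proj_onto K F"
    using orth_proj_in orth_proj_diff
    by (auto simp: proj_onto_def inner_commute dest: orthogonal_compD)
qed

end

lemma orth_proj_orthogonal_comp:
  assumes F: "subspace F"
  shows "orth_proj (orthogonal_comp F) x = x - orth_proj F x"
  by (rule orth_proj_eqI[OF subspace_orthogonal_comp])
     (simp_all add: orth_proj_diff[OF F] orth_proj_in[OF F] orthogonal_comp_self[OF F])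

lemma orth_proj_add_orthogonal_comp:
  assumes F: "subspace F"
  shows "orth_proj F x + orth_proj (orthogonal_comp F) x = x"
  by (simp add: orth_proj_orthogonal_comp[OF F])

lemma compact_linear_image: "linear T \<Longrightarrow> compact Y \<Longrightarrow> compact (T ` Y)"
  for T :: "'a::euclidean_space \<Rightarrow> 'b::euclidean_space"
  by (simp add: compact_continuous_image linear_continuous_on linear_conv_bounded_linear)

lemma orthogonal_transformation_image_orthogonal_comp:
  fixes Q :: "'a::euclidean_space \<Rightarrow> 'a"
  assumes Q: "orthogonal_transformation Q"
  shows "Q ` orthogonal_comp G = orthogonal_comp (Q ` G)"
proof (intro equalityI subsetI)
  fix w assume "w \<in> Q ` orthogonal_comp G"
  then show "w \<in> orthogonal_comp (Q ` G)"
    using Q by (auto intro!: orthogonal_compI dest: orthogonal_compD simp: orthogonal_transformation_def)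
next
  fix w assume w: "w \<in> orthogonal_comp (Q ` G)"
  obtain z where "w = Q z"
    using orthogonal_transformation_surj[OF Q] by (metis surjD)
  moreover have "z \<in> orthogonal_comp G"
    using w Q \<open>w = Q z\<close> by (auto intro!: orthogonal_compI dest: orthogonal_compD simp: orthogonal_transformation_def)
  ultimately show "w \<in> Q ` orthogonal_comp G" by blast
qed

lemma orth_proj_orthogonal_transformation:
  fixes Q :: "'a::euclidean_space \<Rightarrow> 'a"
  assumes Q: "orthogonal_transformation Q" and G: "subspace G" and QG: "Q ` G = F"
  shows "orth_proj F (Q x) = Q (orth_proj G x)"
proof (rule orth_proj_eqI)
  show "subspace F"
    using QG G Q by (metis linear_subspace_image orthogonal_transformation_linear)
  show "Q (orth_proj G x) \<in> F"
    using QG orth_proj_in[OF G] by blast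
  have "Q (x - orth_proj G x) \<in> orthogonal_comp F"
    using orthogonal_transformation_image_orthogonal_comp[OF Q, of G] QG orth_proj_diff[OF G] by blast
  then show "Q x - Q (orth_proj G x) \<in> orthogonal_comp F"
    by (simp add: linear_diff[OF orthogonal_transformation_linear[OF Q]])
qed

lemma inner_orth_proj_left:
  assumes V: "subspace V"
  shows "orth_proj V x \<bullet> y = x \<bullet> orth_proj V y"
proof -
  have "orth_proj V x \<bullet> orth_proj (orthogonal_comp V) y = 0"
    "orth_proj (orthogonal_comp V) x \<bullet> orth_proj V y = 0"
    using orth_proj_in[OF V] orth_proj_in[OF subspace_orthogonal_comp]
    by (auto dest: orthogonal_compD simp: inner_commute)
  then show ?thesis
    using orth_proj_add_orthogonal_comp[OF V, of x] orth_proj_add_orthogonal_comp[OF V, of y]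
    by (metis add.right_neutral add_0 inner_add_left inner_add_right)
qed

lemma adjoint_eqI:
  fixes f :: "'a::euclidean_space \<Rightarrow> 'b::euclidean_space"
  assumes "linear f" and "\<And>x. f x \<bullet> w = x \<bullet> v"
  shows "adjoint f w = v"
proof -
  have "x \<bullet> adjoint f w = x \<bullet> v" for x
    using adjoint_works[OF assms(1)] assms(2) by simp
  then show ?thesis by (metis vector_eq_ldot)
qed

definition block_map :: "'a::euclidean_space set \<Rightarrow> ('a \<Rightarrow> 'a) \<Rightarrow> ('a \<Rightarrow> 'a) \<Rightarrow> 'a \<Rightarrow> 'a" where
  "block_map V S R x = S (orth_proj V x) + R (orth_proj (orthogonal_comp V) x)"

lemma linear_block_map:
  "subspace V \<Longrightarrow> linear S \<Longrightarrow> linear R \<Longrightarrow> linear (block_map V S R)"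
  unfolding block_map_def[abs_def]
  by (intro linear_compose_add linear_compose[unfolded o_def, OF linear_orth_proj] subspace_orthogonal_comp)

lemma block_map_left: "subspace V \<Longrightarrow> linear R \<Longrightarrow> x \<in> V \<Longrightarrow> block_map V S R x = S x"
  by (simp add: block_map_def orth_proj_id orth_proj_orthogonal_comp linear_0)

lemma block_map_right:
  "subspace V \<Longrightarrow> linear S \<Longrightarrow> x \<in> orthogonal_comp V \<Longrightarrow> block_map V S R x = R x"
  by (simp add: block_map_def orth_proj_eq_0 orth_proj_id[OF subspace_orthogonal_comp] linear_0)

lemma adjoint_block_map:
  fixes S R :: "'a::euclidean_space \<Rightarrow> 'a"
  assumes V: "subspace V" and S: "linear S" "S ` V \<subseteq> W"
    and R: "linear R" "R ` orthogonal_comp V \<subseteq> orthogonal_comp W"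
  shows "w \<in> W \<Longrightarrow> adjoint (block_map V S R) w = orth_proj V (adjoint S w)"
    and "w \<in> orthogonal_comp W \<Longrightarrow>
           adjoint (block_map V S R) w = orth_proj (orthogonal_comp V) (adjoint R w)"
proof -
  let ?V' = "orthogonal_comp V"
  have lin: "linear (block_map V S R)" by (rule linear_block_map[OF V S(1) R(1)])
  have SV: "S (orth_proj V x) \<in> W" and RV: "R (orth_proj ?V' x) \<in> orthogonal_comp W" for x
    using S(2) R(2) orth_proj_in[OF V] orth_proj_in[OF subspace_orthogonal_comp] by blast+
  show "adjoint (block_map V S R) w = orth_proj V (adjoint S w)" if w: "w \<in> W"
  proof (rule adjoint_eqI[OF lin])
    fix x
    have "R (orth_proj ?V' x) \<bullet> w = 0"
      using orthogonal_compD[OF RV w] by (simp add: inner_commute)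
    then show "block_map V S R x \<bullet> w = x \<bullet> orth_proj V (adjoint S w)"
      by (simp add: block_map_def inner_add_left adjoint_works[OF S(1), symmetric] inner_orth_proj_left[OF V])
  qed
  show "adjoint (block_map V S R) w = orth_proj ?V' (adjoint R w)" if w: "w \<in> orthogonal_comp W"
  proof (rule adjoint_eqI[OF lin])
    fix x
    show "block_map V S R x \<bullet> w = x \<bullet> orth_proj ?V' (adjoint R w)"
      using orthogonal_compD[OF w SV]
      by (simp add: block_map_def inner_add_left adjoint_works[OF R(1), symmetric]
          inner_orth_proj_left[OF subspace_orthogonal_comp])
  qed
qed

lemma adjoint_orthogonal_transformation:
  fixes Q :: "'a::euclidean_space \<Rightarrow> 'a"
  assumes Q: "orthogonal_transformation Q"
  shows "adjoint Q = inv Q"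
proof
  fix w
  have "Q (inv Q w) = w"
    using orthogonal_transformation_surj[OF Q] by (simp add: surj_f_inv_f)
  then show "adjoint Q w = inv Q w"
    using Q by (intro adjoint_eqI) (auto simp: orthogonal_transformation_def, metis)
qed

section \<open>Volume on subspaces\<close>

abbreviation product_lborel :: "nat \<Rightarrow> (nat \<Rightarrow> real) measure" where
  "product_lborel k \<equiv> PiM {..<k} (\<lambda>_. lborel)"

lemma product_sigma_finite_lborel: "product_sigma_finite (\<lambda>_::'i. lborel :: real measure)"
  by (simp add: product_sigma_finite_def sigma_finite_lborel)

lemma distr_product_lborel_reindex:
  assumes h: "bij_betw h I J" and I: "finite I"
  shows "distr (PiM J (\<lambda>_. lborel)) (PiM I (\<lambda>_. lborel :: real measure)) (\<lambda>t. \<lambda>i\<in>I. t (h i))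
       = PiM I (\<lambda>_. lborel)"
proof (rule product_sigma_finite.PiM_eqI[OF product_sigma_finite_lborel I])
  fix A :: "'a \<Rightarrow> real set"
  assume A: "\<And>i. i \<in> I \<Longrightarrow> A i \<in> sets lborel"
  have J: "finite J" using h I bij_betw_finite by blast
  have meas: "(\<lambda>t. \<lambda>i\<in>I. t (h i)) \<in> PiM J (\<lambda>_. lborel) \<rightarrow>\<^sub>M PiM I (\<lambda>_. lborel :: real measure)"
    using h by (intro measurable_restrict measurable_component_singleton) (auto simp: bij_betw_def)
  have "(\<lambda>t. \<lambda>i\<in>I. t (h i)) -` PiE I A \<inter> space (PiM J (\<lambda>_. lborel))
      = PiE J (\<lambda>j. A (inv_into I h j))"
    using h by (auto simp: space_PiM PiE_iff bij_betw_def extensional_def)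
  then have "emeasure (distr (PiM J (\<lambda>_. lborel)) (PiM I (\<lambda>_. lborel)) (\<lambda>t. \<lambda>i\<in>I. t (h i))) (PiE I A)
      = emeasure (PiM J (\<lambda>_. lborel)) (PiE J (\<lambda>j. A (inv_into I h j)))"
    using meas A I by (subst emeasure_distr) (auto intro: sets_PiM_I_finite)
  also have "\<dots> = (\<Prod>j\<in>J. emeasure lborel (A (inv_into I h j)))"
    using J A h by (intro product_sigma_finite.emeasure_PiM[OF product_sigma_finite_lborel])
       (auto simp: bij_betw_def inv_into_into)
  also have "\<dots> = (\<Prod>i\<in>I. emeasure lborel (A i))"
    using prod.reindex_bij_betw[OF h, of "\<lambda>j. emeasure lborel (A (inv_into I h j))"] h
    by (simp add: bij_betw_inv_into_left)
  finally show "emeasure (distr (PiM J (\<lambda>_. lborel)) (PiM I (\<lambda>_. lborel)) (\<lambda>t. \<lambda>i\<in>I. t (h i))) (PiE I A)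
      = (\<Prod>i\<in>I. emeasure lborel (A i))" .
qed simp

(* The parametrisation used in subspace_volume_def. *)
definition lincomb :: "nat \<Rightarrow> (nat \<Rightarrow> 'a::real_vector) \<Rightarrow> (nat \<Rightarrow> real) \<Rightarrow> 'a" where
  "lincomb k b t = (\<Sum>i<k. t i *\<^sub>R b i)"

lemma lincomb_measurable [measurable]:
  "lincomb k (b :: nat \<Rightarrow> 'a::euclidean_space) \<in> borel_measurable (product_lborel k)"
  unfolding lincomb_def by measurable

lemma lborel_eq_distr_lincomb_axis:
  fixes e :: "nat \<Rightarrow> 'n::finite"
  assumes e: "bij_betw e {..<CARD('n)} UNIV"
  shows "lborel = distr (product_lborel CARD('n)) borel (lincomb CARD('n) (\<lambda>i. axis (e i) (1::real)))"
proof -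
  let ?n = "CARD('n)" and ?a = "\<lambda>i. axis (e i) (1::real)"
  have "bij_betw (\<lambda>p::'n. axis p (1::real)) UNIV Basis"
    by (auto simp: bij_betw_def inj_on_def axis_eq_axis Basis_vec_def)
  then have a: "bij_betw ?a {..<?n} Basis"
    using bij_betw_trans[OF e] by (simp add: o_def)
  define h where "h = inv_into {..<?n} ?a"
  have h: "bij_betw h Basis {..<?n}"
    unfolding h_def by (rule bij_betw_inv_into[OF a])
  have "lborel = distr (PiM Basis (\<lambda>_. lborel)) borel (\<lambda>f. \<Sum>b\<in>Basis. f b *\<^sub>R b)"
    by (rule lborel_eq)
  also have "PiM Basis (\<lambda>_. lborel) = distr (product_lborel ?n) (PiM Basis (\<lambda>_. lborel)) (\<lambda>t. \<lambda>b\<in>Basis. t (h b))"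
    by (rule distr_product_lborel_reindex[OF h, symmetric]) simp
  also have "distr \<dots> borel (\<lambda>f. \<Sum>b\<in>Basis. f b *\<^sub>R b)
      = distr (product_lborel ?n) borel ((\<lambda>f. \<Sum>b\<in>Basis. f b *\<^sub>R b) \<circ> (\<lambda>t. \<lambda>b\<in>Basis. t (h b)))"
    using h by (intro distr_distr) (auto intro!: measurable_restrict measurable_component_singleton simp: bij_betw_def)
  also have "\<dots> = distr (product_lborel ?n) borel (lincomb ?n ?a)"
  proof (rule distr_cong)
    fix t
    have "(\<Sum>b\<in>Basis. t (h b) *\<^sub>R b) = (\<Sum>b\<in>Basis. t (h b) *\<^sub>R ?a (h b))"
      by (intro sum.cong) (simp_all add: h_def bij_betw_inv_into_right[OF a])
    also have "\<dots> = lincomb ?n ?a t"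
      using sum.reindex_bij_betw[OF h, of "\<lambda>i. t i *\<^sub>R ?a i"] by (simp add: lincomb_def)
    finally show "((\<lambda>f. \<Sum>b\<in>Basis. f b *\<^sub>R b) \<circ> (\<lambda>t. \<lambda>b\<in>Basis. t (h b))) t = lincomb ?n ?a t"
      by simp
  qed simp_all
  finally show ?thesis .
qed

definition orthonormal_family :: "nat \<Rightarrow> (nat \<Rightarrow> 'a::real_inner) \<Rightarrow> bool" where
  "orthonormal_family k b \<longleftrightarrow> (\<forall>i<k. \<forall>l<k. b i \<bullet> b l = (if i = l then 1 else 0))"

definition frame_volume :: "nat \<Rightarrow> (nat \<Rightarrow> 'a::euclidean_space) \<Rightarrow> 'a set \<Rightarrow> real" where
  "frame_volume k b X = measure (product_lborel k) (lincomb k b -` X \<inter> space (product_lborel k))"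

lemma inner_lincomb_orthonormal:
  assumes "orthonormal_family k b" and "i < k"
  shows "lincomb k b t \<bullet> b i = t i"
proof -
  have "lincomb k b t \<bullet> b i = (\<Sum>l<k. if l = i then t l else 0)"
    unfolding lincomb_def inner_sum_left
    using assms by (intro sum.cong) (auto simp: orthonormal_family_def)
  then show ?thesis using assms(2) by simp
qed

lemma orthogonal_transformation_frame:
  fixes c :: "nat \<Rightarrow> real^'n" and e :: "nat \<Rightarrow> 'n"
  assumes c: "orthonormal_family CARD('n) c" and e: "bij_betw e {..<CARD('n)} UNIV"
  defines "U \<equiv> \<lambda>x. lincomb CARD('n) c (\<lambda>i. x $ e i)"
  shows "orthogonal_transformation U" and "U (lincomb CARD('n) (\<lambda>i. axis (e i) 1) t) = lincomb CARD('n) c t"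
proof -
  let ?n = "CARD('n)"
  have lin: "linear U"
    unfolding U_def lincomb_def by (intro linearI) (simp_all add: sum.distrib scaleR_add_left scale_sum_right)
  have "U x \<bullet> U y = x \<bullet> y" for x y
  proof -
    have "U x \<bullet> U y = (\<Sum>i<?n. (x $ e i) * (c i \<bullet> U y))"
      unfolding U_def lincomb_def[of _ _ "\<lambda>i. x $ e i"] by (simp add: inner_sum_left)
    also have "\<dots> = (\<Sum>i<?n. (x $ e i) * (y $ e i))"
      by (intro sum.cong) (simp_all add: U_def inner_commute[of "c _"] inner_lincomb_orthonormal[OF c])
    also have "\<dots> = x \<bullet> y"
      using sum.reindex_bij_betw[OF e, of "\<lambda>p. x $ p * y $ p"] by (simp add: inner_vec_def)
    finally show ?thesis .
  qed
  with lin show "orthogonal_transformation U"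
    by (simp add: orthogonal_transformation_def)
  have "U (axis (e i) 1) = c i" if "i < ?n" for i
  proof -
    have "U (axis (e i) 1) = (\<Sum>l<?n. if l = i then c l else 0)"
      unfolding U_def lincomb_def
      using e that by (intro sum.cong) (auto simp: axis_def bij_betw_def inj_on_def)
    then show ?thesis using that by simp
  qed
  then show "U (lincomb ?n (\<lambda>i. axis (e i) 1) t) = lincomb ?n c t"
    by (simp add: lincomb_def linear_sum[OF lin] linear_scale[OF lin])
qed

lemma frame_volume_eq_lebesgue:
  fixes c :: "nat \<Rightarrow> real^'n"
  assumes c: "orthonormal_family CARD('n) c" and W: "compact W"
  shows "frame_volume CARD('n) c W = measure lebesgue W"
proof -
  let ?n = "CARD('n)"
  obtain e :: "nat \<Rightarrow> 'n" where e: "bij_betw e {..<?n} UNIV"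
    using ex_bij_betw_nat_finite[of "UNIV::'n set"] by (auto simp: atLeast0LessThan)
  define U :: "real^'n \<Rightarrow> real^'n" where "U = (\<lambda>x. lincomb ?n c (\<lambda>i. x $ e i))"
  have U: "orthogonal_transformation U"
    and pre: "lincomb ?n c -` W = lincomb ?n (\<lambda>i. axis (e i) 1) -` (U -` W)"
    using orthogonal_transformation_frame[OF c e] unfolding U_def by auto
  have lin: "linear U" by (rule orthogonal_transformation_linear[OF U])
  have "U -` W = inv U ` W"
    by (rule bij_vimage_eq_inv_image[OF orthogonal_transformation_bij[OF U]])
  then have V: "compact (U -` W)"
    using compact_linear_image[OF orthogonal_transformation_linear[OF orthogonal_transformation_inv[OF U]] W]
    by simp
  have "frame_volume ?n c W = measure lborel (U -` W)"
    unfolding frame_volume_def pre using V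
    by (subst lborel_eq_distr_lincomb_axis[OF e]) (simp add: measure_distr borel_compact)
  also have "\<dots> = measure lebesgue (U ` (U -` W))"
    using measure_linear_image_cart[OF lin lmeasurable_compact[OF V]] U V
    by (simp add: borel_compact)
  also have "U ` (U -` W) = W"
    using orthogonal_transformation_surj[OF U] by (simp add: surj_image_vimage_eq)
  finally show ?thesis .
qed

lemma emeasure_product_lborel_split:
  assumes S1: "S1 \<in> sets (product_lborel k)" and S2: "S2 \<in> sets (product_lborel m)"
  shows "emeasure (product_lborel (k + m))
           {t \<in> space (product_lborel (k + m)). restrict t {..<k} \<in> S1 \<and> (\<lambda>i\<in>{..<m}. t (k + i)) \<in> S2}
       = emeasure (product_lborel k) S1 * emeasure (product_lborel m) S2"
proof -
  interpret J: finite_product_sigma_finite "\<lambda>_::nat. lborel :: real measure" "{k..<k+m}"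
    by standard auto
  let ?shift = "\<lambda>t. \<lambda>i\<in>{..<m}. t (k + i)"
  let ?J = "PiM {k..<k+m} (\<lambda>_. lborel :: real measure)"
  let ?T = "{t \<in> space (product_lborel (k + m)). restrict t {..<k} \<in> S1 \<and> ?shift t \<in> S2}"
  have U: "{..<k} \<union> {k..<k+m} = {..<k+m}" by auto
  have shift: "distr ?J (product_lborel m) ?shift = product_lborel m"
  proof (rule distr_product_lborel_reindex)
    have "x \<in> (+) k ` {..<m}" if "x \<in> {k..<k+m}" for x
      using that by (intro image_eqI[of _ _ "x - k"]) auto
    then have "{k..<k+m} = (+) k ` {..<m}"
      by auto
    then show "bij_betw ((+) k) {..<m} {k..<k+m}"
      by (simp add: bij_betw_def)
  qed simp
  have shift_meas: "?shift \<in> ?J \<rightarrow>\<^sub>M product_lborel m"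
    by (intro measurable_restrict measurable_component_singleton) auto
  have merge: "distr (product_lborel k \<Otimes>\<^sub>M ?J) (product_lborel (k + m)) (merge {..<k} {k..<k+m})
      = product_lborel (k + m)"
    using product_sigma_finite.distr_merge[OF product_sigma_finite_lborel, of "{..<k}" "{k..<k+m}"]
    by (simp add: U ivl_disj_int(2))
  have T: "?T \<in> sets (product_lborel (k + m))"
  proof -
    have "(\<lambda>t. restrict t {..<k}) \<in> product_lborel (k + m) \<rightarrow>\<^sub>M product_lborel k"
      and "?shift \<in> product_lborel (k + m) \<rightarrow>\<^sub>M product_lborel m"
      by (intro measurable_restrict measurable_component_singleton; auto)+
    then show ?thesis using S1 S2 by measurable
  qed
  have restrict_merge: "restrict (merge {..<k} {k..<k+m} (x, y)) {..<k} = x" if "x \<in> space (product_lborel k)" for x y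
    using that by (auto simp: space_PiM PiE_iff extensional_def merge_def restrict_def fun_eq_iff)
  have shift_merge: "?shift (merge {..<k} {k..<k+m} (x, y)) = ?shift y" for x y
    by (auto simp: merge_def fun_eq_iff)
  have "merge {..<k} {k..<k+m} -` ?T \<inter> space (product_lborel k \<Otimes>\<^sub>M ?J)
      = S1 \<times> (?shift -` S2 \<inter> space ?J)"
    using sets.sets_into_space[OF S1] U
    by (auto simp: space_pair_measure restrict_merge shift_merge space_PiM
             simp del: Pi_cancel_merge PiE_cancel_merge)
  then have "emeasure (product_lborel (k + m)) ?T = emeasure (product_lborel k \<Otimes>\<^sub>M ?J) (S1 \<times> (?shift -` S2 \<inter> space ?J))"
    using T merge measurable_merge[of "{..<k}" "{k..<k+m}" "\<lambda>_. lborel :: real measure"] U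
    by (subst merge[symmetric], subst emeasure_distr) auto
  also have "\<dots> = emeasure (product_lborel k) S1 * emeasure ?J (?shift -` S2 \<inter> space ?J)"
    using S1 S2 shift_meas by (intro J.emeasure_pair_measure_Times) auto
  also have "emeasure ?J (?shift -` S2 \<inter> space ?J) = emeasure (product_lborel m) S2"
    using S2 shift_meas by (subst shift[symmetric]) (simp add: emeasure_distr)
  finally show ?thesis .
qed

lemma lincomb_append:
  "lincomb (k + m) (\<lambda>i. if i < k then b i else b' (i - k)) t
     = lincomb k b t + lincomb m b' (\<lambda>i. t (k + i))"
proof -
  have "lincomb (k + m) (\<lambda>i. if i < k then b i else b' (i - k)) t
      = (\<Sum>i=0..<k. t i *\<^sub>R b i) + (\<Sum>i=k..<k+m. t i *\<^sub>R b' (i - k))"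
    unfolding lincomb_def lessThan_atLeast0 sum.atLeastLessThan_concat[of 0 k "k+m", symmetric, simplified]
    by (intro arg_cong2[where f="(+)"] sum.cong) auto
  also have "(\<Sum>i=k..<k+m. t i *\<^sub>R b' (i - k)) = lincomb m b' (\<lambda>i. t (k + i))"
    using sum.shift_bounds_nat_ivl[of "\<lambda>i. t i *\<^sub>R b' (i - k)" 0 k m]
    by (simp add: lincomb_def lessThan_atLeast0 add.commute)
  finally show ?thesis by (simp add: lincomb_def lessThan_atLeast0)
qed

lemma orthonormal_family_append:
  assumes "orthonormal_family k b" "orthonormal_family m b'"
    and "\<And>i l. i < k \<Longrightarrow> l < m \<Longrightarrow> b i \<bullet> b' l = 0"
  shows "orthonormal_family (k + m) (\<lambda>i. if i < k then b i else b' (i - k))"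
  using assms unfolding orthonormal_family_def
  by (auto simp: inner_commute)

lemma lincomb_in_subspace: "subspace F \<Longrightarrow> (\<And>i. i < k \<Longrightarrow> b i \<in> F) \<Longrightarrow> lincomb k b t \<in> F"
  unfolding lincomb_def by (intro subspace_sum subspace_scale) auto

lemma measure_set_plus_orthonormal_frames:
  fixes F :: "(real^'n) set" and b b' :: "nat \<Rightarrow> real^'n"
  assumes F: "subspace F" and km: "k + m = CARD('n)"
    and b: "orthonormal_family k b" "\<And>i. i < k \<Longrightarrow> b i \<in> F"
    and b': "orthonormal_family m b'" "\<And>i. i < m \<Longrightarrow> b' i \<in> orthogonal_comp F"
    and X: "compact X" "X \<subseteq> F" and Z: "compact Z" "Z \<subseteq> orthogonal_comp F"
  shows "measure lebesgue (X + Z) = frame_volume k b X * frame_volume m b' Z"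
proof -
  define c where "c i = (if i < k then b i else b' (i - k))" for i
  have c: "orthonormal_family (k + m) c"
    unfolding c_def using b b' by (intro orthonormal_family_append) (auto dest: orthogonal_compD)
  let ?shift = "\<lambda>t. \<lambda>i\<in>{..<m}. t (k + i)"
  let ?S1 = "lincomb k b -` X \<inter> space (product_lborel k)"
  let ?S2 = "lincomb m b' -` Z \<inter> space (product_lborel m)"
  have lincomb_c: "lincomb (k + m) c t = lincomb k b (restrict t {..<k}) + lincomb m b' (?shift t)" for t
    using lincomb_append[of k m b b' t] by (simp add: c_def lincomb_def)
  have "lincomb (k + m) c -` (X + Z) \<inter> space (product_lborel (k + m))
      = {t \<in> space (product_lborel (k + m)). restrict t {..<k} \<in> ?S1 \<and> ?shift t \<in> ?S2}"
  proof (intro set_eqI iffI)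
    fix t assume t: "t \<in> lincomb (k + m) c -` (X + Z) \<inter> space (product_lborel (k + m))"
    then obtain x z where xz: "x \<in> X" "z \<in> Z" "lincomb (k + m) c t = x + z"
      by (auto elim: set_plus_elim)
    have "lincomb k b (restrict t {..<k}) = x \<and> lincomb m b' (?shift t) = z"
      using xz X Z b(2) b'(2) lincomb_c
      by (intro orthogonal_comp_decomp_unique[OF F]) (auto intro: lincomb_in_subspace[OF F]
            lincomb_in_subspace[OF subspace_orthogonal_comp])
    with t xz show "t \<in> {t \<in> space (product_lborel (k + m)). restrict t {..<k} \<in> ?S1 \<and> ?shift t \<in> ?S2}"
      by (auto simp: space_PiM)
  qed (auto simp: lincomb_c)
  then have "frame_volume (k + m) c (X + Z) = enn2real (emeasure (product_lborel k) ?S1 * emeasure (product_lborel m) ?S2)"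
    unfolding frame_volume_def measure_def
    using measurable_sets[OF lincomb_measurable borel_compact[OF X(1)], of k b]
      measurable_sets[OF lincomb_measurable borel_compact[OF Z(1)], of m b']
    by (subst emeasure_product_lborel_split[symmetric]) auto
  also have "\<dots> = frame_volume k b X * frame_volume m b' Z"
    by (simp add: frame_volume_def measure_def enn2real_mult)
  moreover have "X + Z = (\<Union>x\<in>X. \<Union>z\<in>Z. {x + z})"
    by (auto simp: set_plus_def)
  then have "compact (X + Z)"
    using compact_sums'[OF X(1) Z(1)] by simp
  ultimately show ?thesis
    using frame_volume_eq_lebesgue[of c "X + Z"] c km by simp
qed

lemma frame_volume_cball_pos:
  fixes b :: "nat \<Rightarrow> 'a::euclidean_space"
  assumes b: "orthonormal_family m b" and S: "\<And>t. lincomb m b t \<in> S"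
  shows "0 < frame_volume m b (cball 0 1 \<inter> S)"
proof -
  let ?P = "lincomb m b -` (cball 0 1 \<inter> S) \<inter> space (product_lborel m)"
  let ?small = "PiE {..<m} (\<lambda>_. {0..1 / real (Suc m)})"
  let ?big = "PiE {..<m} (\<lambda>_. {-1..1::real})"
  have norm_b: "norm (b i) = 1" if "i < m" for i
    using b that by (simp add: orthonormal_family_def norm_eq_1)
  have small: "?small \<subseteq> ?P"
  proof
    fix t assume t: "t \<in> ?small"
    have "norm (lincomb m b t) \<le> (\<Sum>i<m. norm (t i *\<^sub>R b i))"
      unfolding lincomb_def by (rule norm_sum)
    also have "\<dots> \<le> (\<Sum>i<m. 1 / real (Suc m))"
      using t by (intro sum_mono) (auto simp: PiE_iff norm_b)
    also have "\<dots> \<le> 1" by (simp add: field_simps)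
    finally show "t \<in> ?P" using t S by (auto simp: space_PiM PiE_iff)
  qed
  have big: "?P \<subseteq> ?big"
  proof
    fix t assume t: "t \<in> ?P"
    have "\<bar>t i\<bar> \<le> 1" if "i < m" for i
    proof -
      have "\<bar>t i\<bar> = \<bar>lincomb m b t \<bullet> b i\<bar>" using inner_lincomb_orthonormal[OF b that] by simp
      also have "\<dots> \<le> norm (lincomb m b t) * norm (b i)" by (rule Cauchy_Schwarz_ineq2)
      also have "\<dots> \<le> 1" using t norm_b[OF that] by auto
      finally show ?thesis .
    qed
    then show "t \<in> ?big" using t by (auto simp: space_PiM PiE_iff abs_le_iff)
  qed
  have "?P = lincomb m b -` cball 0 1 \<inter> space (product_lborel m)"
    using S by auto
  then have P: "?P \<in> sets (product_lborel m)"
    by (simp add: measurable_sets[OF lincomb_measurable])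
  have "emeasure (product_lborel m) ?small = (\<Prod>i<m. ennreal (1 / real (Suc m)))"
    by (subst product_sigma_finite.emeasure_PiM[OF product_sigma_finite_lborel]) auto
  also have "\<dots> = ennreal ((1 / real (Suc m)) ^ m)"
    by (simp add: ennreal_power)
  finally have "0 < emeasure (product_lborel m) ?small"
    by simp
  also have "\<dots> \<le> emeasure (product_lborel m) ?P"
    by (rule emeasure_mono[OF small P])
  finally have pos: "0 < emeasure (product_lborel m) ?P" .
  have "emeasure (product_lborel m) ?P \<le> emeasure (product_lborel m) ?big"
    by (rule emeasure_mono[OF big]) (auto intro: sets_PiM_I_finite)
  also have "\<dots> = 2 ^ m"
    by (subst product_sigma_finite.emeasure_PiM[OF product_sigma_finite_lborel]) auto
  finally have "emeasure (product_lborel m) ?P < \<infinity>"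
    by (simp add: le_less_trans power_less_top_ennreal)
  with pos show ?thesis
    by (simp add: frame_volume_def measure_def enn2real_positive_iff)
qed

lemma orthonormal_basis_of_exists:
  fixes F :: "'a::euclidean_space set"
  assumes F: "subspace F"
  shows "\<exists>b. orthonormal_basis_of F (dim F) b"
proof -
  obtain B where B: "B \<subseteq> F" "pairwise orthogonal B" "\<And>x. x \<in> B \<Longrightarrow> norm x = 1"
    "independent B" "card B = dim F" "span B = F"
    using orthonormal_basis_subspace[OF F] by metis
  obtain e where e: "bij_betw e {..<dim F} B"
    using ex_bij_betw_nat_finite[of B] B(4,5) by (auto simp: independent_imp_finite atLeast0LessThan)
  have "e i \<bullet> e l = (if i = l then 1 else 0)" if "i < dim F" "l < dim F" for i l
    using that e B(2,3)
    by (auto simp: bij_betw_def inj_on_def pairwise_def orthogonal_def norm_eq_1) (meson lessThan_iff)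
  moreover have "span (e ` {..<dim F}) = F"
    using e B(6) by (simp add: bij_betw_def)
  ultimately show ?thesis
    unfolding orthonormal_basis_of_def by blast
qed

lemma orthonormal_basis_ofD:
  assumes "orthonormal_basis_of F k b"
  shows "orthonormal_family k b" and "\<And>i. i < k \<Longrightarrow> b i \<in> F"
  using assms unfolding orthonormal_basis_of_def orthonormal_family_def
  by (simp, metis image_eqI lessThan_iff span_base)

lemma dim_add_dim_orthogonal_comp:
  fixes F :: "'a::euclidean_space set"
  assumes F: "subspace F"
  shows "dim F + dim (orthogonal_comp F) = DIM('a)"
proof -
  have "{x + y |x y. x \<in> F \<and> y \<in> orthogonal_comp F} = F + orthogonal_comp F"
    by (auto simp: set_plus_def)
  then have "dim {x + y |x y. x \<in> F \<and> y \<in> orthogonal_comp F} = DIM('a)"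
    by (simp add: subspace_sum_orthogonal_comp[OF F])
  moreover have "dim (F \<inter> orthogonal_comp F) = 0"
    unfolding orthogonal_Int_0[OF F] by (metis dim_empty dim_span span_insert_0)
  ultimately show ?thesis
    using dim_sums_Int[OF F subspace_orthogonal_comp[of F]] by linarith
qed

lemma subspace_volume_eq_some_frame:
  "subspace_volume F X = frame_volume (dim F) (SOME b. orthonormal_basis_of F (dim F) b) X"
  by (simp add: subspace_volume_def frame_volume_def lincomb_def[abs_def] Let_def)

lemma measure_set_plus_subspace_volume:
  fixes F :: "(real^'n) set"
  assumes F: "subspace F"
    and X: "compact X" "X \<subseteq> F" and Z: "compact Z" "Z \<subseteq> orthogonal_comp F"
  shows "measure lebesgue (X + Z) = subspace_volume F X * subspace_volume (orthogonal_comp F) Z"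
  using someI_ex[OF orthonormal_basis_of_exists[OF F]]
    someI_ex[OF orthonormal_basis_of_exists[OF subspace_orthogonal_comp[of F]]]
  unfolding subspace_volume_eq_some_frame
  by (intro measure_set_plus_orthonormal_frames[OF F dim_add_dim_orthogonal_comp[OF F, simplified] _ _ _ _ X Z])
     (auto dest: orthonormal_basis_ofD)

lemma compact_cball_Int_subspace: "subspace F \<Longrightarrow> compact (cball (0::'a::euclidean_space) 1 \<inter> F)"
  by (simp add: closed_subspace compact_Int_closed)

lemma subspace_volume_cball_pos:
  fixes F :: "'a::euclidean_space set"
  assumes F: "subspace F"
  shows "0 < subspace_volume F (cball 0 1 \<inter> F)"
  using someI_ex[OF orthonormal_basis_of_exists[OF F]]
  unfolding subspace_volume_eq_some_frame
  by (intro frame_volume_cball_pos lincomb_in_subspace[OF F]) (auto dest: orthonormal_basis_ofD)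

lemma subspace_volume_eq_frame_volume:
  fixes F :: "(real^'n) set"
  assumes F: "subspace F" and b: "orthonormal_basis_of F (dim F) b"
    and X: "compact X" "X \<subseteq> F"
  shows "subspace_volume F X = frame_volume (dim F) b X"
proof -
  let ?B = "cball 0 1 \<inter> orthogonal_comp F"
  let ?b' = "SOME b'. orthonormal_basis_of (orthogonal_comp F) (dim (orthogonal_comp F)) b'"
  have b': "orthonormal_basis_of (orthogonal_comp F) (dim (orthogonal_comp F)) ?b'"
    by (rule someI_ex[OF orthonormal_basis_of_exists[OF subspace_orthogonal_comp]])
  have B: "compact ?B" "?B \<subseteq> orthogonal_comp F"
    using compact_cball_Int_subspace[OF subspace_orthogonal_comp] by auto
  have "subspace_volume F X * subspace_volume (orthogonal_comp F) ?B = measure lebesgue (X + ?B)"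
    by (rule measure_set_plus_subspace_volume[OF F X B, symmetric])
  also have "\<dots> = frame_volume (dim F) b X * subspace_volume (orthogonal_comp F) ?B"
    using b b' unfolding subspace_volume_eq_some_frame[of "orthogonal_comp F"]
    by (intro measure_set_plus_orthonormal_frames[OF F dim_add_dim_orthogonal_comp[OF F, simplified] _ _ _ _ X B])
       (auto dest: orthonormal_basis_ofD)
  finally show ?thesis
    using subspace_volume_cball_pos[OF subspace_orthogonal_comp[of F]] by simp
qed

lemma subspace_volume_orthogonal_image:
  fixes G :: "(real^'n) set" and Q :: "real^'n \<Rightarrow> real^'n"
  assumes Q: "orthogonal_transformation Q" and G: "subspace G" and Y: "compact Y" "Y \<subseteq> G"
  shows "subspace_volume (Q ` G) (Q ` Y) = subspace_volume G Y"
proof -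
  have lin: "linear Q" and inj: "inj Q"
    using Q by (simp_all add: orthogonal_transformation_linear orthogonal_transformation_inj)
  have dim: "dim (Q ` G) = dim G"
    using lin inj by (metis dim_image_eq inj_on_subset subset_UNIV)
  obtain b where b: "orthonormal_basis_of G (dim G) b"
    using orthonormal_basis_of_exists[OF G] by blast
  have "orthonormal_basis_of (Q ` G) (dim (Q ` G)) (Q \<circ> b)"
    using b span_linear_image[OF lin, of "b ` {..<dim G}"] Q
    by (simp add: orthonormal_basis_of_def dim image_comp orthogonal_transformation_def)
  moreover have "compact (Q ` Y)"
    using compact_linear_image[OF lin Y(1)] .
  ultimately have "subspace_volume (Q ` G) (Q ` Y) = frame_volume (dim G) (Q \<circ> b) (Q ` Y)"
    using Y(2) dim linear_subspace_image[OF lin G]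
    by (subst subspace_volume_eq_frame_volume) auto
  also have "lincomb k (Q \<circ> b) -` (Q ` Y) = lincomb k b -` Y" for k
  proof -
    have "lincomb k (Q \<circ> b) t = Q (lincomb k b t)" for t
      by (simp add: lincomb_def linear_sum[OF lin] linear_scale[OF lin])
    then show ?thesis using inj by (auto simp: inj_image_mem_iff dest: injD)
  qed
  then have "frame_volume (dim G) (Q \<circ> b) (Q ` Y) = frame_volume (dim G) b Y"
    by (simp add: frame_volume_def)
  also have "\<dots> = subspace_volume G Y"
    using subspace_volume_eq_frame_volume[OF G b Y] by simp
  finally show ?thesis .
qed

section \<open>Volume factors of linear maps between subspaces\<close>

lemma orthogonal_transformation_onto_subspace:
  fixes G F :: "'a::euclidean_space set"
  assumes G: "subspace G" and F: "subspace F" and d: "dim G = dim F"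
  obtains Q where "orthogonal_transformation Q" and "Q ` G = F"
proof -
  obtain f where f: "linear f" "f ` G = F" "\<And>x. x \<in> G \<Longrightarrow> norm (f x) = norm x"
    using isometry_subspaces[OF G F d] by blast
  have "dim (orthogonal_comp G) = dim (orthogonal_comp F)"
    using dim_add_dim_orthogonal_comp[OF G] dim_add_dim_orthogonal_comp[OF F] d by simp
  then obtain g where g: "linear g" "g ` orthogonal_comp G = orthogonal_comp F"
    "\<And>x. x \<in> orthogonal_comp G \<Longrightarrow> norm (g x) = norm x"
    using isometry_subspaces[OF subspace_orthogonal_comp subspace_orthogonal_comp] by blast
  define Q where "Q = block_map G f g"
  have lin: "linear Q"
    unfolding Q_def by (rule linear_block_map[OF G f(1) g(1)])
  have "norm (Q x) = norm x" for x
  proof -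
    have "f (orth_proj G x) \<in> F" "g (orth_proj (orthogonal_comp G) x) \<in> orthogonal_comp F"
      using f(2) g(2) orth_proj_in[OF G] orth_proj_in[OF subspace_orthogonal_comp[of G]] by blast+
    then have "(norm (Q x))\<^sup>2 = (norm (orth_proj G x))\<^sup>2 + (norm (orth_proj (orthogonal_comp G) x))\<^sup>2"
      using f(3) g(3) orth_proj_in[OF G] orth_proj_in[OF subspace_orthogonal_comp[of G]]
      by (simp add: Q_def block_map_def norm_add_Pythagorean orthogonal_def orthogonal_compD)
    also have "\<dots> = (norm x)\<^sup>2"
      using norm_add_Pythagorean[of "orth_proj G x" "orth_proj (orthogonal_comp G) x"]
        orth_proj_in[OF G] orth_proj_in[OF subspace_orthogonal_comp[of G]]
      by (simp add: orth_proj_add_orthogonal_comp[OF G] orthogonal_def orthogonal_compD[of _ G])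
    finally show ?thesis by simp
  qed
  with lin have "orthogonal_transformation Q"
    by (simp add: orthogonal_transformation)
  moreover have "Q x = f x" if "x \<in> G" for x
    unfolding Q_def by (rule block_map_left[OF G g(1) that])
  then have "Q ` G = F"
    using f(2) by auto
  ultimately show ?thesis by (rule that)
qed

(* Meaningful when T maps G into F and dim G = dim F: see subspace_volume_linear_image. *)
definition volume_factor :: "(real^'n) set \<Rightarrow> (real^'n) set \<Rightarrow> (real^'n \<Rightarrow> real^'n) \<Rightarrow> real" where
  "volume_factor G F T = subspace_volume F (T ` (cball 0 1 \<inter> G)) / subspace_volume G (cball 0 1 \<inter> G)"

lemma subspace_volume_block_image:
  fixes T :: "real^'n \<Rightarrow> real^'n"
  assumes T: "linear T" and G: "subspace G" and F: "subspace F"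
    and TG: "T ` G \<subseteq> F" and TG': "T ` orthogonal_comp G \<subseteq> orthogonal_comp F"
    and Y: "compact Y" "Y \<subseteq> G" and Z: "compact Z" "Z \<subseteq> orthogonal_comp G"
  shows "subspace_volume F (T ` Y) * subspace_volume (orthogonal_comp F) (T ` Z)
       = \<bar>det (matrix T)\<bar> * (subspace_volume G Y * subspace_volume (orthogonal_comp G) Z)"
proof -
  have img: "T ` (Y + Z) = T ` Y + T ` Z"
  proof (intro set_eqI iffI)
    fix w assume "w \<in> T ` (Y + Z)"
    then obtain y z where "y \<in> Y" "z \<in> Z" "w = T y + T z"
      by (auto simp: linear_add[OF T] elim!: set_plus_elim)
    then show "w \<in> T ` Y + T ` Z" by auto
  next
    fix w assume "w \<in> T ` Y + T ` Z"
    then obtain y z where "y \<in> Y" "z \<in> Z" "w = T (y + z)"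
      by (auto simp: linear_add[OF T] elim!: set_plus_elim)
    then show "w \<in> T ` (Y + Z)" by auto
  qed
  have "Y + Z = (\<Union>y\<in>Y. \<Union>z\<in>Z. {y + z})"
    by (auto simp: set_plus_def)
  then have "compact (Y + Z)"
    using compact_sums'[OF Y(1) Z(1)] by simp
  then have "measure lebesgue (T ` (Y + Z)) = \<bar>det (matrix T)\<bar> * measure lebesgue (Y + Z)"
    by (intro measure_linear_image_cart[OF T] lmeasurable_compact)
  moreover have "measure lebesgue (T ` (Y + Z))
      = subspace_volume F (T ` Y) * subspace_volume (orthogonal_comp F) (T ` Z)"
    unfolding img
    by (intro measure_set_plus_subspace_volume[OF F] compact_linear_image[OF T])
       (use TG TG' Y Z in blast)+
  ultimately show ?thesis
    using measure_set_plus_subspace_volume[OF G Y Z] by simp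
qed

lemma volume_factor_cong:
  "(\<And>x. x \<in> G \<Longrightarrow> T x = T' x) \<Longrightarrow> volume_factor G F T = volume_factor G F T'"
  unfolding volume_factor_def by (metis (no_types, lifting) IntD2 image_cong)

lemma subspace_volume_linear_image:
  fixes T :: "real^'n \<Rightarrow> real^'n"
  assumes G: "subspace G" and F: "subspace F" and d: "dim G = dim F"
    and T: "linear T" and TG: "T ` G \<subseteq> F" and Y: "compact Y" "Y \<subseteq> G"
  shows "subspace_volume F (T ` Y) = volume_factor G F T * subspace_volume G Y"
proof -
  obtain Q where Q: "orthogonal_transformation Q" "Q ` G = F"
    using orthogonal_transformation_onto_subspace[OF G F d] by blast
  have QG': "Q ` orthogonal_comp G = orthogonal_comp F"
    using orthogonal_transformation_image_orthogonal_comp[OF Q(1)] Q(2) by simp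
  \<comment> \<open>Complete \<open>T\<close> by an isometry \<open>G\<^sup>\<bottom> \<rightarrow> F\<^sup>\<bottom>\<close> to a map of the whole space.\<close>
  define B where "B = block_map G T Q"
  have linQ: "linear Q" by (rule orthogonal_transformation_linear[OF Q(1)])
  have lin: "linear B"
    unfolding B_def by (rule linear_block_map[OF G T linQ])
  have BG: "B y = T y" if "y \<in> G" for y
    unfolding B_def by (rule block_map_left[OF G linQ that])
  have BG': "B z = Q z" if "z \<in> orthogonal_comp G" for z
    unfolding B_def by (rule block_map_right[OF G T that])
  let ?Z = "cball 0 1 \<inter> orthogonal_comp G"
  have Z: "compact ?Z" "?Z \<subseteq> orthogonal_comp G"
    using compact_cball_Int_subspace[OF subspace_orthogonal_comp] by auto
  have "B ` ?Z = Q ` ?Z"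
    by (rule image_cong) (auto simp: BG')
  then have BZ: "subspace_volume (orthogonal_comp F) (B ` ?Z) = subspace_volume (orthogonal_comp G) ?Z"
    using subspace_volume_orthogonal_image[OF Q(1) subspace_orthogonal_comp Z] QG' by simp
  have scale: "subspace_volume F (T ` Y') = \<bar>det (matrix B)\<bar> * subspace_volume G Y'"
    if "compact Y'" "Y' \<subseteq> G" for Y'
  proof -
    have "B ` Y' = T ` Y'" using that BG by (intro image_cong) auto
    moreover have "B ` G \<subseteq> F" "B ` orthogonal_comp G \<subseteq> orthogonal_comp F"
      using TG QG' BG BG' by auto
    ultimately show ?thesis
      using subspace_volume_block_image[OF lin G F _ _ that Z] BZ
        subspace_volume_cball_pos[OF subspace_orthogonal_comp[of G]] by simp
  qed
  have "volume_factor G F T = \<bar>det (matrix B)\<bar>"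
    using scale[OF compact_cball_Int_subspace[OF G]] subspace_volume_cball_pos[OF G]
    by (simp add: volume_factor_def)
  with scale[OF Y] show ?thesis by simp
qed

lemma volume_factor_block:
  fixes T :: "real^'n \<Rightarrow> real^'n"
  assumes T: "linear T" and G: "subspace G" and F: "subspace F"
    and TG: "T ` G \<subseteq> F" and TG': "T ` orthogonal_comp G \<subseteq> orthogonal_comp F"
  shows "volume_factor G F T * volume_factor (orthogonal_comp G) (orthogonal_comp F) T = \<bar>det (matrix T)\<bar>"
  using subspace_volume_block_image[OF T G F TG TG' compact_cball_Int_subspace[OF G] _
      compact_cball_Int_subspace[OF subspace_orthogonal_comp]]
    subspace_volume_cball_pos[OF G] subspace_volume_cball_pos[OF subspace_orthogonal_comp[of G]]
  by (simp add: volume_factor_def)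

lemma volume_factor_orthogonal_transformation:
  assumes "orthogonal_transformation Q" and "subspace G"
  shows "volume_factor G (Q ` G) Q = 1"
  using subspace_volume_orthogonal_image[OF assms compact_cball_Int_subspace[OF assms(2)]]
    subspace_volume_cball_pos[OF assms(2)]
  by (simp add: volume_factor_def)

lemma volume_factor_comp:
  fixes S T :: "real^'n \<Rightarrow> real^'n"
  assumes G: "subspace G" and F: "subspace F" and H: "subspace H"
    and d: "dim G = dim F" "dim F = dim H"
    and S: "linear S" "S ` F \<subseteq> H" and T: "linear T" "T ` G \<subseteq> F"
  shows "volume_factor G H (S \<circ> T) = volume_factor F H S * volume_factor G F T"
proof -
  let ?B = "cball 0 1 \<inter> G"
  have "subspace_volume H ((S \<circ> T) ` ?B) = volume_factor F H S * subspace_volume F (T ` ?B)"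
    unfolding image_comp[symmetric] using T
    by (intro subspace_volume_linear_image[OF F H d(2) S] compact_linear_image compact_cball_Int_subspace[OF G])
       auto
  also have "\<dots> = volume_factor F H S * (volume_factor G F T * subspace_volume G ?B)"
    using T by (simp add: subspace_volume_linear_image[OF G F d(1)] compact_cball_Int_subspace[OF G])
  finally show ?thesis
    using subspace_volume_cball_pos[OF G] by (simp add: volume_factor_def)
qed

lemma orth_proj_substandard:
  fixes I :: "'n::finite set"
  shows "orth_proj {x::real^'n. \<forall>i. i \<notin> I \<longrightarrow> x $ i = 0} x = (\<chi> i. if i \<in> I then x $ i else 0)"
proof (rule orth_proj_eqI)
  show "subspace {x::real^'n. \<forall>i. i \<notin> I \<longrightarrow> x $ i = 0}"
    by (auto simp: subspace_def)
  show "x - (\<chi> i. if i \<in> I then x $ i else 0) \<in> orthogonal_comp {x::real^'n. \<forall>i. i \<notin> I \<longrightarrow> x $ i = 0}"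
    by (rule orthogonal_compI) (auto simp: inner_vec_def intro!: sum.neutral)
qed simp

lemma det_scale_on_subspace:
  fixes E :: "(real^'n) set"
  assumes E: "subspace E"
  shows "det (matrix (block_map E (\<lambda>x. c *\<^sub>R x) (\<lambda>x. x))) = c ^ dim E"
proof -
  let ?T = "\<lambda>x. c *\<^sub>R orth_proj E x + orth_proj (orthogonal_comp E) x"
  have "dim E \<le> card (UNIV :: 'n set)"
    using dim_subset_UNIV[of E] by simp
  then obtain I :: "'n set" where I: "card I = dim E"
    by (meson obtain_subset_with_card_n)
  \<comment> \<open>Conjugate by an isometry onto a coordinate subspace, where the map is diagonal.\<close>
  define S where "S = {x::real^'n. \<forall>i. i \<notin> I \<longrightarrow> x $ i = 0}"
  have S: "subspace S"
    by (auto simp: S_def subspace_def)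
  have "dim S = dim E"
    using dim_substandard_cart[of I, where 'a=real, unfolded dim_vec_eq] I by (simp add: S_def)
  then obtain Q where Q: "orthogonal_transformation Q" "Q ` S = E"
    using orthogonal_transformation_onto_subspace[OF S E] by blast
  have linQ: "linear Q" using Q(1) by (rule orthogonal_transformation_linear)
  define D where "D x = (\<chi> i. (if i \<in> I then c else 1) * x $ i)" for x :: "real^'n"
  have linT: "linear ?T"
    by (intro linear_compose_add linear_compose_scale_right linear_orth_proj E subspace_orthogonal_comp)
  have linD: "linear D"
    unfolding D_def by (intro linearI) (simp_all add: vec_eq_iff algebra_simps)
  have "?T (Q x) = Q (D x)" for x
  proof -
    have "orth_proj E (Q x) = Q (orth_proj S x)"
      by (rule orth_proj_orthogonal_transformation[OF Q(1) S Q(2)])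
    moreover have "D x = c *\<^sub>R orth_proj S x + (x - orth_proj S x)"
      by (simp add: D_def S_def orth_proj_substandard vec_eq_iff)
    ultimately show ?thesis
      by (simp add: orth_proj_orthogonal_comp[OF E] linear_add[OF linQ] linear_diff[OF linQ]
          linear_scale[OF linQ])
  qed
  then have "?T \<circ> Q = Q \<circ> D" by auto
  then have "det (matrix ?T) * det (matrix Q) = det (matrix Q) * det (matrix D)"
    using matrix_compose[OF linQ linT] matrix_compose[OF linD linQ] by (metis det_mul)
  moreover have "det (matrix Q) \<noteq> 0"
    using orthogonal_transformation_det[OF Q(1)] by auto
  moreover have "det (matrix D) = c ^ dim E"
    by (simp add: D_def det_diagonal matrix_def axis_def prod.If_cases I[symmetric])
  ultimately show ?thesis by (simp add: block_map_def[abs_def])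
qed

lemma subspace_volume_scaleR:
  fixes E :: "(real^'n) set"
  assumes E: "subspace E" and X: "compact X" "X \<subseteq> E"
  shows "subspace_volume E ((\<lambda>x. c *\<^sub>R x) ` X) = \<bar>c\<bar> ^ dim E * subspace_volume E X"
proof -
  let ?T = "block_map E (\<lambda>x. c *\<^sub>R x) (\<lambda>x. x)"
  have linT: "linear ?T"
    by (rule linear_block_map[OF E linear_scale_self linear_ident])
  have TE: "?T y = c *\<^sub>R y" if "y \<in> E" for y
    by (rule block_map_left[OF E linear_ident that])
  have TE': "?T z = z" if "z \<in> orthogonal_comp E" for z
    by (rule block_map_right[OF E linear_scale_self that])
  have "?T ` E \<subseteq> E" "?T ` orthogonal_comp E \<subseteq> orthogonal_comp E"
    using TE TE' E by (auto simp: subspace_scale)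
  then have "volume_factor E E ?T * volume_factor (orthogonal_comp E) (orthogonal_comp E) ?T = \<bar>c\<bar> ^ dim E"
    using volume_factor_block[OF linT E E] det_scale_on_subspace[OF E, of c] by (simp add: power_abs)
  moreover have "volume_factor E E ?T = volume_factor E E (\<lambda>x. c *\<^sub>R x)"
    using TE by (rule volume_factor_cong)
  moreover have "volume_factor (orthogonal_comp E) (orthogonal_comp E) ?T = 1"
    using volume_factor_cong[of "orthogonal_comp E" ?T "\<lambda>x. x", OF TE']
      volume_factor_orthogonal_transformation[OF orthogonal_transformation_id subspace_orthogonal_comp]
    by simp
  moreover have "subspace_volume E ((\<lambda>x. c *\<^sub>R x) ` X) = volume_factor E E (\<lambda>x. c *\<^sub>R x) * subspace_volume E X"
    using X E by (intro subspace_volume_linear_image[OF E E refl]) (auto simp: subspace_scale)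
  ultimately show ?thesis by simp
qed

section \<open>Linear images of projection bodies\<close>

lemma abs_det_id_plus_square_zero:
  fixes U :: "real^'n \<Rightarrow> real^'n"
  assumes E: "subspace E" and U: "linear U"
    and into: "\<And>x. U x \<in> E" and kills: "\<And>x. x \<in> E \<Longrightarrow> U x = 0"
  shows "\<bar>det (matrix (\<lambda>x. x + U x))\<bar> = 1"
proof -
  \<comment> \<open>Conjugating by the reflection \<open>J\<close> in \<open>E\<^sup>\<bottom>\<close> turns \<open>id + U\<close> into its inverse \<open>id - U\<close>.\<close>
  define J where "J = block_map E uminus (\<lambda>x. x)"
  have linJ: "linear J"
    unfolding J_def by (rule linear_block_map[OF E linear_uminus linear_ident])
  have J_E: "J e = - e" if "e \<in> E" for e
    unfolding J_def by (rule block_map_left[OF E linear_ident that])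
  have J_orth: "J z = z" if "z \<in> orthogonal_comp E" for z
    unfolding J_def by (rule block_map_right[OF E linear_uminus that])
  have J: "J x = - orth_proj E x + orth_proj (orthogonal_comp E) x" for x
    by (simp add: J_def block_map_def)
  have "J (J x) = x" for x
    using J_E[OF orth_proj_in[OF E]] J_orth[OF orth_proj_in[OF subspace_orthogonal_comp]]
    by (simp add: J[of x] linear_add[OF linJ] linear_neg[OF linJ] linear_diff[OF linJ])
       (simp add: orth_proj_orthogonal_comp[OF E])
  then have detJ: "\<bar>det (matrix J)\<bar> = 1"
    by (rule abs_det_involution[OF linJ])
  have UJ: "U (J x) = U x" for x
    using kills[OF orth_proj_in[OF E]] orth_proj_add_orthogonal_comp[OF E, of x]
    by (metis J add.left_neutral linear_add[OF U] linear_neg[OF U] neg_0_equal_iff_equal)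
  let ?M = "\<lambda>x. x + U x" and ?N = "\<lambda>x. x - U x"
  have linM: "linear ?M" and linN: "linear ?N"
    using U by (simp_all add: linear_compose_add linear_compose_sub linear_id[unfolded id_def])
  have "?N \<circ> ?M = id"
    using kills[OF into] by (auto simp: linear_add[OF U])
  then have "det (matrix ?N) * det (matrix ?M) = 1"
    using matrix_compose[OF linM linN] by (metis det_I det_mul matrix_id_mat_1)
  moreover have "J \<circ> ?M \<circ> J = ?N"
  proof
    fix x
    show "(J \<circ> ?M \<circ> J) x = ?N x"
      using \<open>J (J x) = x\<close> J_E[OF into] by (simp add: linear_add[OF linJ] UJ)
  qed
  then have "matrix ?N = matrix J ** matrix ?M ** matrix J"
    using matrix_compose[OF linM linJ] matrix_compose[OF linJ linear_compose[OF linM linJ]] by simp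
  then have "\<bar>det (matrix ?N)\<bar> = \<bar>det (matrix ?M)\<bar>"
    using detJ by (simp add: det_mul abs_mult)
  ultimately have "\<bar>det (matrix ?M)\<bar> * \<bar>det (matrix ?M)\<bar> = 1"
    by (metis abs_mult abs_one)
  then show ?thesis
    using abs_ge_zero[of "det (matrix ?M)"] by (auto simp: square_eq_1_iff)
qed

lemma volume_factor_adjoint:
  fixes S :: "real^'n \<Rightarrow> real^'n"
  assumes V: "subspace V" and W: "subspace W" and d: "dim V = dim W"
    and S: "linear S" and SV: "S ` V \<subseteq> W"
  shows "volume_factor W V (\<lambda>x. orth_proj V (adjoint S x)) = volume_factor V W S"
proof -
  let ?V' = "orthogonal_comp V" and ?W' = "orthogonal_comp W"
  have "dim ?V' = dim ?W'"
    using dim_add_dim_orthogonal_comp[OF V] dim_add_dim_orthogonal_comp[OF W] d by simp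
  then obtain Q where Q: "orthogonal_transformation Q" "Q ` ?V' = ?W'"
    using orthogonal_transformation_onto_subspace[OF subspace_orthogonal_comp subspace_orthogonal_comp]
    by blast
  have linQ: "linear Q" using Q(1) by (rule orthogonal_transformation_linear)
  have Qi: "orthogonal_transformation (inv Q)" "inv Q ` ?W' = ?V'"
    using orthogonal_transformation_inv[OF Q(1)] image_inv_f_f[OF orthogonal_transformation_inj[OF Q(1)]]
    by (simp_all flip: Q(2))
  \<comment> \<open>The block map \<open>B = S \<oplus> Q\<close> and its adjoint \<open>P\<^sub>V S\<^sup>* \<oplus> Q\<^sup>-\<^sup>1\<close> have the same \<open>|det|\<close>.\<close>
  define B where "B = block_map V S Q"
  have linB: "linear B"
    unfolding B_def by (rule linear_block_map[OF V S linQ])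
  have BV: "B y = S y" if "y \<in> V" for y
    unfolding B_def by (rule block_map_left[OF V linQ that])
  have BV': "B z = Q z" if "z \<in> ?V'" for z
    unfolding B_def by (rule block_map_right[OF V S that])
  have adjW: "adjoint B w = orth_proj V (adjoint S w)" if "w \<in> W" for w
    unfolding B_def using Q(2) by (intro adjoint_block_map[OF V S SV linQ] that) simp
  have adjW': "adjoint B w = inv Q w" if "w \<in> ?W'" for w
  proof -
    have "inv Q w \<in> ?V'" using that Qi(2) by blast
    then show ?thesis
      unfolding B_def using that Q(2)
      by (simp add: adjoint_block_map(2)[OF V S SV linQ] adjoint_orthogonal_transformation[OF Q(1)]
          orth_proj_id[OF subspace_orthogonal_comp])
  qed
  have "volume_factor V W B * volume_factor ?V' ?W' B = \<bar>det (matrix B)\<bar>"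
    using BV BV' SV Q(2) by (intro volume_factor_block[OF linB V W]) auto
  moreover have "volume_factor W V (adjoint B) * volume_factor ?W' ?V' (adjoint B) = \<bar>det (matrix B)\<bar>"
    using adjW adjW' Qi(2) orth_proj_in[OF V]
    by (subst volume_factor_block[OF adjoint_linear[OF linB] W V])
       (auto simp: matrix_adjoint[OF linB])
  moreover have "volume_factor ?V' ?W' B = 1"
    using volume_factor_cong[of ?V' B Q ?W', OF BV']
      volume_factor_orthogonal_transformation[OF Q(1) subspace_orthogonal_comp[of V]] Q(2)
    by simp
  moreover have "volume_factor ?W' ?V' (adjoint B) = 1"
    using volume_factor_cong[of ?W' "adjoint B" "inv Q" ?V', OF adjW']
      volume_factor_orthogonal_transformation[OF Qi(1) subspace_orthogonal_comp[of W]] Qi(2)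
    by simp
  moreover have "volume_factor V W B = volume_factor V W S"
    using BV by (rule volume_factor_cong)
  moreover have "volume_factor W V (adjoint B) = volume_factor W V (\<lambda>x. orth_proj V (adjoint S x))"
    using adjW by (rule volume_factor_cong)
  ultimately show ?thesis by simp
qed

lemma matrix_inv_invertible:
  fixes A :: "'a::semiring_1^'n^'n"
  assumes "invertible A"
  shows "A ** matrix_inv A = mat 1" and "matrix_inv A ** A = mat 1"
proof -
  have "\<exists>A'. A ** A' = mat 1 \<and> A' ** A = mat 1"
    using assms by (simp add: invertible_def)
  then have "A ** matrix_inv A = mat 1 \<and> matrix_inv A ** A = mat 1"
    unfolding matrix_inv_def by (rule someI_ex)
  then show "A ** matrix_inv A = mat 1" "matrix_inv A ** A = mat 1" by auto
qed

lemma matrix_inv_vector_mul: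
  fixes A :: "real^'n^'n"
  assumes "invertible A"
  shows "A *v (matrix_inv A *v x) = x" and "matrix_inv A *v (A *v x) = x"
  using matrix_inv_invertible[OF assms] by (simp_all add: matrix_vector_mul_assoc)

lemma orthogonal_comp_transpose_image:
  fixes A :: "real^'n^'m"
  shows "z \<in> orthogonal_comp ((\<lambda>x. transpose A *v x) ` F) \<longleftrightarrow> A *v z \<in> orthogonal_comp F"
  by (auto simp: orthogonal_comp_def orthogonal_def dot_lmul_matrix)

lemma subspace_transpose_image:
  fixes A :: "real^'n^'n"
  assumes A: "invertible A" and F: "subspace F"
  defines "G \<equiv> (\<lambda>x. transpose A *v x) ` F"
  shows "subspace G" and "dim G = dim F" and "dim (orthogonal_comp G) = dim (orthogonal_comp F)"
proof -
  show G: "subspace G"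
    unfolding G_def by (intro linear_subspace_image F matrix_vector_mul_linear)
  have "inj (\<lambda>x. transpose A *v x)"
    by (metis injI matrix_inv_vector_mul(2)[OF transpose_invertible[OF A]])
  then show dim: "dim G = dim F"
    unfolding G_def by (metis dim_image_eq inj_on_subset matrix_vector_mul_linear subset_UNIV)
  show "dim (orthogonal_comp G) = dim (orthogonal_comp F)"
    using dim_add_dim_orthogonal_comp[OF G] dim_add_dim_orthogonal_comp[OF F] dim by simp
qed

lemma volume_factor_projected_block:
  fixes A :: "real^'n^'n"
  assumes A: "invertible A" and E: "subspace E"
  defines "G \<equiv> (\<lambda>x. transpose A *v x) ` orthogonal_comp E"
  shows "volume_factor G (orthogonal_comp E) (\<lambda>x. orth_proj (orthogonal_comp E) (A *v x))
           * volume_factor (orthogonal_comp G) E (\<lambda>x. A *v x) = \<bar>det A\<bar>"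
proof -
  let ?F = "orthogonal_comp E"
  have G: "subspace G"
    unfolding G_def by (rule subspace_transpose_image[OF A subspace_orthogonal_comp])
  have G_perp: "z \<in> orthogonal_comp G \<longleftrightarrow> A *v z \<in> E" for z
    unfolding G_def orthogonal_comp_transpose_image orthogonal_comp_self[OF E] ..
  \<comment> \<open>\<open>(id + U) \<circ> A\<close> is \<open>A\<close> with the block \<open>P\<^sub>E A P\<^sub>G\<close> removed; \<open>U\<close> maps into \<open>E\<close> and kills \<open>E = A G\<^sup>\<bottom>\<close>.\<close>
  define U where "U y = - orth_proj E (A *v orth_proj G (matrix_inv A *v y))" for y
  have linU: "linear U"
    using linear_orth_proj[OF E] linear_orth_proj[OF G]
    by (intro linearI) (simp_all add: U_def matrix_vector_right_distrib matrix_vector_mult_scaleR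
        linear_add linear_scale)
  have "U e = 0" if "e \<in> E" for e
    using that matrix_inv_vector_mul(1)[OF A, of e]
    by (simp add: U_def G_perp orth_proj_eq_0[OF G] linear_0[OF linear_orth_proj[OF E]])
  moreover have "U y \<in> E" for y
    by (simp add: U_def subspace_neg[OF E] orth_proj_in[OF E])
  ultimately have detM: "\<bar>det (matrix (\<lambda>y. y + U y))\<bar> = 1"
    by (intro abs_det_id_plus_square_zero[OF E linU])
  define Psi where "Psi x = A *v x + U (A *v x)" for x
  have linPsi: "linear Psi"
    unfolding Psi_def[abs_def] by (intro linear_compose_add linear_compose[unfolded o_def, OF _ linU]) simp_all
  have "matrix Psi = matrix (\<lambda>y. y + U y) ** A"
    using matrix_compose[OF matrix_vector_mul_linear[of A] linear_compose_add[OF linear_ident linU]]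
    by (simp add: Psi_def[abs_def] o_def)
  then have detPsi: "\<bar>det (matrix Psi)\<bar> = \<bar>det A\<bar>"
    using detM by (simp add: det_mul abs_mult)
  have Psi_G: "Psi y = orth_proj ?F (A *v y)" if "y \<in> G" for y
    using that by (simp add: Psi_def U_def matrix_inv_vector_mul[OF A] orth_proj_id[OF G]
        orth_proj_orthogonal_comp[OF E])
  have Psi_G': "Psi z = A *v z" if "z \<in> orthogonal_comp G" for z
    using that by (simp add: Psi_def U_def matrix_inv_vector_mul[OF A] orth_proj_eq_0[OF G]
        linear_0[OF linear_orth_proj[OF E]])
  have "volume_factor G ?F Psi * volume_factor (orthogonal_comp G) E Psi = \<bar>det A\<bar>"
    using volume_factor_block[OF linPsi G subspace_orthogonal_comp[of E]] detPsi
      Psi_G Psi_G' orth_proj_in[OF subspace_orthogonal_comp[of E]] G_perp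
    by (auto simp: orthogonal_comp_self[OF E])
  moreover have "volume_factor G ?F Psi = volume_factor G ?F (\<lambda>x. orth_proj ?F (A *v x))"
    using Psi_G by (rule volume_factor_cong)
  moreover have "volume_factor (orthogonal_comp G) E Psi = volume_factor (orthogonal_comp G) E (\<lambda>x. A *v x)"
    using Psi_G' by (rule volume_factor_cong)
  ultimately show ?thesis by simp
qed

lemma volume_factor_transpose_inverse:
  fixes A :: "real^'n^'n"
  assumes A: "invertible A" and E: "subspace E"
  defines "G \<equiv> (\<lambda>x. transpose A *v x) ` orthogonal_comp E"
  shows "volume_factor (orthogonal_comp G) E (\<lambda>x. A *v x)
           * volume_factor (orthogonal_comp G) E (\<lambda>x. orth_proj E (matrix_inv (transpose A) *v x)) = 1"
proof -
  let ?F = "orthogonal_comp E" and ?H = "orthogonal_comp G"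
  let ?P = "\<lambda>x. orth_proj ?H (transpose A *v x)" and ?Q = "\<lambda>x. orth_proj E (matrix_inv (transpose A) *v x)"
  have F: "subspace ?F" and H: "subspace ?H" by (simp_all add: subspace_orthogonal_comp)
  have G: "subspace G" and dimH: "dim ?H = dim E"
    using subspace_transpose_image[OF A F] by (simp_all add: G_def orthogonal_comp_self[OF E])
  have G_perp: "z \<in> ?H \<longleftrightarrow> A *v z \<in> E" for z
    unfolding G_def orthogonal_comp_transpose_image orthogonal_comp_self[OF E] ..
  have AT: "invertible (transpose A)" by (rule transpose_invertible[OF A])
  have linP: "linear ?P"
    using linear_compose[OF matrix_vector_mul_linear linear_orth_proj[OF H]] unfolding o_def .
  have linQ: "linear ?Q"
    using linear_compose[OF matrix_vector_mul_linear linear_orth_proj[OF E]] unfolding o_def .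
  have "volume_factor E ?H ?P = volume_factor ?H E (\<lambda>x. A *v x)"
    using volume_factor_adjoint[OF H E dimH matrix_vector_mul_linear] G_perp
    by (auto simp: adjoint_matrix)
  moreover have "volume_factor ?H ?H (?P \<circ> ?Q) = volume_factor E ?H ?P * volume_factor ?H E ?Q"
    using orth_proj_in[OF H] orth_proj_in[OF E] by (intro volume_factor_comp[OF H E H dimH dimH[symmetric] linP _ linQ]) auto
  moreover have "(?P \<circ> ?Q) x = x" if "x \<in> ?H" for x
  proof -
    let ?w = "transpose A *v orth_proj ?F (matrix_inv (transpose A) *v x)"
    have "?w \<in> G" unfolding G_def using orth_proj_in[OF F] by blast
    then have "orth_proj ?H ?w = 0"
      by (intro orth_proj_eq_0[OF H]) (simp add: orthogonal_comp_self[OF G])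
    moreover have "?Q x = matrix_inv (transpose A) *v x - orth_proj ?F (matrix_inv (transpose A) *v x)"
      using orth_proj_orthogonal_comp[OF F] by (simp add: orthogonal_comp_self[OF E])
    then have "(?P \<circ> ?Q) x = orth_proj ?H (x - ?w)"
      by (simp only: o_def matrix_vector_mult_diff_distrib matrix_inv_vector_mul(1)[OF AT])
    ultimately show ?thesis
      using that by (simp only: linear_diff[OF linear_orth_proj[OF H]] orth_proj_id[OF H] diff_zero)
  qed
  then have "volume_factor ?H ?H (?P \<circ> ?Q) = 1"
    using volume_factor_cong[of ?H "?P \<circ> ?Q" "\<lambda>x. x" ?H]
      volume_factor_orthogonal_transformation[OF orthogonal_transformation_id H] by simp
  ultimately show ?thesis by (simp add: mult.commute)
qed

lemma proj_onto_linear_image: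
  fixes f :: "'a::euclidean_space \<Rightarrow> 'a"
  assumes F: "subspace F" and G: "subspace G" and f: "linear f"
    and fG: "f ` orthogonal_comp G \<subseteq> orthogonal_comp F"
  shows "proj_onto (f ` K) F = (\<lambda>x. orth_proj F (f x)) ` proj_onto K G"
proof -
  have "orth_proj F (f x) = orth_proj F (f (orth_proj G x))" for x
  proof -
    have "f (orth_proj (orthogonal_comp G) x) \<in> orthogonal_comp F"
      using fG orth_proj_in[OF subspace_orthogonal_comp] by blast
    then have "orth_proj F (f (orth_proj (orthogonal_comp G) x)) = 0"
      by (rule orth_proj_eq_0[OF F])
    moreover have "f x = f (orth_proj G x) + f (orth_proj (orthogonal_comp G) x)"
      using orth_proj_add_orthogonal_comp[OF G, of x] linear_add[OF f] by metis
    ultimately show ?thesis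
      by (simp add: linear_add[OF linear_orth_proj[OF F]])
  qed
  then show ?thesis
    by (simp add: proj_onto_eq_image[OF F] proj_onto_eq_image[OF G] image_image)
qed

lemma subspace_volume_proj_onto_linear_image:
  fixes f :: "real^'n \<Rightarrow> real^'n"
  assumes F: "subspace F" and G: "subspace G" and d: "dim G = dim F" and f: "linear f"
    and fG: "f ` orthogonal_comp G \<subseteq> orthogonal_comp F" and K: "compact K"
  shows "subspace_volume F (proj_onto (f ` K) F)
       = volume_factor G F (\<lambda>x. orth_proj F (f x)) * subspace_volume G (proj_onto K G)"
proof -
  have "compact (proj_onto K G)" "proj_onto K G \<subseteq> G"
    using compact_linear_image[OF linear_orth_proj[OF G] K] orth_proj_in[OF G]
    by (auto simp: proj_onto_eq_image[OF G])
  moreover have "linear (\<lambda>x. orth_proj F (f x))"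
    using linear_compose[OF f linear_orth_proj[OF F]] unfolding o_def .
  ultimately show ?thesis
    using orth_proj_in[OF F]
    by (auto simp: proj_onto_linear_image[OF F G f fG] intro!: subspace_volume_linear_image[OF G F d])
qed

lemma volume_factor_scaleR:
  fixes T :: "real^'n \<Rightarrow> real^'n"
  assumes G: "subspace G" and F: "subspace F" and T: "linear T" and TG: "T ` G \<subseteq> F"
  shows "volume_factor G F (\<lambda>x. c *\<^sub>R T x) = \<bar>c\<bar> ^ dim F * volume_factor G F T"
proof -
  let ?B = "cball 0 1 \<inter> G"
  have "(\<lambda>x. c *\<^sub>R T x) ` ?B = (\<lambda>v. c *\<^sub>R v) ` T ` ?B"
    by (simp add: image_image)
  moreover have "compact (T ` ?B)" "T ` ?B \<subseteq> F"
    using compact_linear_image[OF T compact_cball_Int_subspace[OF G]] TG by auto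
  ultimately show ?thesis
    by (simp add: volume_factor_def subspace_volume_scaleR[OF F])
qed

lemma volume_factor_duality:
  fixes A :: "real^'n^'n"
  assumes A: "invertible A" and E: "subspace E"
  defines "G \<equiv> (\<lambda>x. transpose A *v x) ` orthogonal_comp E"
  shows "volume_factor G (orthogonal_comp E) (\<lambda>x. orth_proj (orthogonal_comp E) (A *v x))
       = \<bar>det A\<bar> * volume_factor (orthogonal_comp G) E (\<lambda>x. orth_proj E (matrix_inv (transpose A) *v x))"
proof -
  let ?a = "volume_factor G (orthogonal_comp E) (\<lambda>x. orth_proj (orthogonal_comp E) (A *v x))"
  let ?b = "volume_factor (orthogonal_comp G) E (\<lambda>x. A *v x)"
  let ?c = "volume_factor (orthogonal_comp G) E (\<lambda>x. orth_proj E (matrix_inv (transpose A) *v x))"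
  have ab: "?a * ?b = \<bar>det A\<bar>" and bc: "?b * ?c = 1"
    unfolding G_def by (rule volume_factor_projected_block[OF A E] volume_factor_transpose_inverse[OF A E])+
  have "?a = ?a * (?b * ?c)" by (simp add: bc)
  also have "\<dots> = \<bar>det A\<bar> * ?c" by (simp only: mult.assoc[symmetric] ab)
  finally show ?thesis .
qed

lemma is_j_projection_body_linear_image:
  fixes A :: "real^'n^'n" and K L :: "(real^'n) set"
  assumes A: "invertible A" and j: "j < CARD('n)" and K: "compact K" and L: "compact L"
    and KL: "is_j_projection_body j K L"
  shows "is_j_projection_body j ((\<lambda>x. A *v x) ` K)
           ((\<lambda>x. (\<bar>det A\<bar> powr (1 / real (CARD('n) - j))) *\<^sub>R (matrix_inv (transpose A) *v x)) ` L)"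
  unfolding is_j_projection_body_def
proof (intro allI impI, elim conjE)
  fix E :: "(real^'n) set"
  assume E: "subspace E" and dimE: "dim E = DIM(real^'n) - j"
  let ?F = "orthogonal_comp E" and ?g = "\<lambda>x. matrix_inv (transpose A) *v x"
  define G where "G = (\<lambda>x. transpose A *v x) ` ?F"
  define c where "c = \<bar>det A\<bar> powr (1 / real (CARD('n) - j))"
  have F: "subspace ?F" and G': "subspace (orthogonal_comp G)"
    by (simp_all add: subspace_orthogonal_comp)
  have G: "subspace G" "dim G = dim ?F" and dimG': "dim (orthogonal_comp G) = dim E"
    using subspace_transpose_image[OF A F] by (simp_all add: G_def orthogonal_comp_self[OF E])
  have "A *v z \<in> E" if "z \<in> orthogonal_comp G" for z
    using that unfolding G_def orthogonal_comp_transpose_image orthogonal_comp_self[OF E] .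
  then have lhs: "subspace_volume ?F (proj_onto ((\<lambda>x. A *v x) ` K) ?F)
      = volume_factor G ?F (\<lambda>x. orth_proj ?F (A *v x)) * subspace_volume G (proj_onto K G)"
    by (intro subspace_volume_proj_onto_linear_image[OF F G matrix_vector_mul_linear _ K])
       (auto simp: orthogonal_comp_self[OF E])
  have "c *\<^sub>R ?g y \<in> ?F" if y: "y \<in> G" for y
  proof -
    obtain f where "f \<in> ?F" "y = transpose A *v f"
      using y unfolding G_def by blast
    then show ?thesis
      using subspace_scale[OF F] by (simp only: matrix_inv_vector_mul(2)[OF transpose_invertible[OF A]])
  qed
  then have "subspace_volume E (proj_onto ((\<lambda>x. c *\<^sub>R ?g x) ` L) E)
      = volume_factor (orthogonal_comp G) E (\<lambda>x. orth_proj E (c *\<^sub>R ?g x))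
        * subspace_volume (orthogonal_comp G) (proj_onto L (orthogonal_comp G))"
    by (intro subspace_volume_proj_onto_linear_image[OF E G' dimG' _ _ L])
       (auto simp: linear_compose_scale_right orthogonal_comp_self[OF G(1)])
  also have "volume_factor (orthogonal_comp G) E (\<lambda>x. orth_proj E (c *\<^sub>R ?g x))
      = \<bar>c\<bar> ^ dim E * volume_factor (orthogonal_comp G) E (\<lambda>x. orth_proj E (?g x))"
    using orth_proj_in[OF E] linear_compose[OF matrix_vector_mul_linear linear_orth_proj[OF E]]
    by (auto simp: linear_scale[OF linear_orth_proj[OF E]] o_def intro!: volume_factor_scaleR[OF G' E])
  also have "\<bar>c\<bar> ^ dim E = \<bar>det A\<bar>"
  proof -
    have "det A \<noteq> 0" using A by (simp add: invertible_det_nz)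
    then show ?thesis
      using dimE j by (simp add: c_def powr_realpow[symmetric] powr_powr)
  qed
  also have "subspace_volume (orthogonal_comp G) (proj_onto L (orthogonal_comp G))
      = subspace_volume G (proj_onto K G)"
    using KL G' dimG' dimE unfolding is_j_projection_body_def
    by (metis orthogonal_comp_self[OF G(1)])
  finally show "subspace_volume ?F (proj_onto ((\<lambda>x. A *v x) ` K) ?F)
      = subspace_volume E (proj_onto ((\<lambda>x. c *\<^sub>R ?g x) ` L) E)"
    using lhs volume_factor_duality[OF A E, folded G_def] by simp
qed

section \<open>Invariance of the class of projection bodies\<close>

lemma infdist_linear_image_le:
  fixes f :: "'a::real_normed_vector \<Rightarrow> 'b::real_normed_vector"
  assumes f: "linear f" and B: "0 < B" "\<And>x. norm (f x) \<le> B * norm x" and T: "T \<noteq> {}"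
  shows "infdist (f x) (f ` T) \<le> B * infdist x T"
proof -
  have "infdist (f x) (f ` T) / B \<le> infdist x T"
    unfolding infdist_notempty[OF T]
  proof (rule cINF_greatest[OF T])
    fix t assume t: "t \<in> T"
    have "infdist (f x) (f ` T) \<le> dist (f x) (f t)" using t by (intro infdist_le) auto
    also have "\<dots> = norm (f (x - t))" by (simp add: dist_norm linear_diff[OF f])
    also have "\<dots> \<le> B * dist x t" using B(2)[of "x - t"] by (simp add: dist_norm)
    finally show "infdist (f x) (f ` T) / B \<le> dist x t" using B(1) by (simp add: field_simps)
  qed
  then show ?thesis using B(1) by (simp add: field_simps)
qed

lemma bdd_above_infdist_compact:
  fixes S :: "'a::real_normed_vector set"
  assumes S: "compact S" and T: "T \<noteq> {}"
  shows "bdd_above ((\<lambda>x. infdist x T) ` S)"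
proof -
  obtain t where t: "t \<in> T" using T by auto
  obtain M where M: "\<And>x. x \<in> S \<Longrightarrow> norm x \<le> M"
    using compact_imp_bounded[OF S] by (auto simp: bounded_iff)
  have "infdist x T \<le> M + norm t" if "x \<in> S" for x
    using infdist_le[OF t, of x] M[OF that] norm_triangle_ineq4[of x t] by (simp add: dist_norm)
  then show ?thesis by (auto simp: bdd_above_def)
qed

lemma hausdorff_dist_nonneg:
  fixes S T :: "'a::real_normed_vector set"
  assumes "compact S" "S \<noteq> {}" "T \<noteq> {}"
  shows "0 \<le> hausdorff_dist S T"
proof -
  obtain x where x: "x \<in> S" using assms(2) by auto
  have "0 \<le> infdist x T" by (rule infdist_nonneg)
  also have "\<dots> \<le> (SUP x\<in>S. infdist x T)"
    by (rule cSUP_upper[OF x bdd_above_infdist_compact[OF assms(1,3)]])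
  finally show ?thesis by (simp add: hausdorff_dist_def)
qed

lemma hausdorff_dist_linear_image_le:
  fixes f :: "'a::real_normed_vector \<Rightarrow> 'b::real_normed_vector"
  assumes f: "linear f" and B: "0 < B" "\<And>x. norm (f x) \<le> B * norm x"
    and S: "compact S" "S \<noteq> {}" and T: "compact T" "T \<noteq> {}"
  shows "hausdorff_dist (f ` S) (f ` T) \<le> B * hausdorff_dist S T"
proof -
  have sup_le: "(SUP x\<in>f ` X. infdist x (f ` Y)) \<le> B * hausdorff_dist S T"
    if "compact X" "X \<noteq> {}" "Y \<noteq> {}" and le: "(SUP x\<in>X. infdist x Y) \<le> hausdorff_dist S T"
    for X Y
  proof -
    have "(SUP x\<in>f ` X. infdist x (f ` Y)) = (SUP x\<in>X. infdist (f x) (f ` Y))"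
      by (simp add: image_image)
    also have "\<dots> \<le> B * (SUP x\<in>X. infdist x Y)"
    proof (rule cSUP_least[OF that(2)])
      fix x assume "x \<in> X"
      then have "infdist x Y \<le> (SUP x\<in>X. infdist x Y)"
        by (rule cSUP_upper[OF _ bdd_above_infdist_compact[OF that(1,3)]])
      then show "infdist (f x) (f ` Y) \<le> B * (SUP x\<in>X. infdist x Y)"
        using infdist_linear_image_le[OF f B that(3), of x] B(1)
        by (meson mult_left_mono less_imp_le order_trans)
    qed
    also have "\<dots> \<le> B * hausdorff_dist S T"
      using le B(1) by simp
    finally show ?thesis .
  qed
  show ?thesis
    unfolding hausdorff_dist_def[of "f ` S"]
    using sup_le[OF S T(2)] sup_le[OF T S(2)] by (simp add: hausdorff_dist_def)
qed

definition j_projection_bodies :: "nat \<Rightarrow> 'a::euclidean_space set set" where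
  "j_projection_bodies j = {K. convex_body K \<and> origin_symmetric K \<and>
     (\<exists>L. convex_body L \<and> origin_symmetric L \<and> interior L \<noteq> {} \<and> is_j_projection_body j K L)}"

lemma j_projection_class_eq:
  "j_projection_class j = {C. compact C \<and> C \<noteq> {} \<and>
     (\<exists>X. (\<forall>i. X i \<in> j_projection_bodies j) \<and> (\<lambda>i. hausdorff_dist (X i) C) \<longlonglongrightarrow> 0)}"
  by (simp add: j_projection_class_def j_projection_bodies_def)

lemma convex_body_linear_image:
  fixes f :: "'a::euclidean_space \<Rightarrow> 'b::euclidean_space"
  shows "linear f \<Longrightarrow> convex_body K \<Longrightarrow> convex_body (f ` K)"
  by (auto simp: convex_body_def compact_linear_image convex_linear_image)

lemma origin_symmetric_linear_image:
  "linear f \<Longrightarrow> origin_symmetric K \<Longrightarrow> origin_symmetric (f ` K)"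
  by (auto simp: origin_symmetric_def linear_neg[symmetric] image_iff)

lemma j_projection_bodies_linear_image:
  fixes A :: "real^'n^'n"
  assumes A: "invertible A" and j: "j < CARD('n)" and K: "K \<in> j_projection_bodies j"
  shows "(\<lambda>x. A *v x) ` K \<in> j_projection_bodies j"
proof -
  obtain L where K: "convex_body K" "origin_symmetric K"
    and L: "convex_body L" "origin_symmetric L" "interior L \<noteq> {}" "is_j_projection_body j K L"
    using K by (auto simp: j_projection_bodies_def)
  define g where "g x = (\<bar>det A\<bar> powr (1 / real (CARD('n) - j))) *\<^sub>R (matrix_inv (transpose A) *v x)"
    for x :: "real^'n"
  have lin: "linear g"
    unfolding g_def[abs_def] by (simp add: linear_compose_scale_right)
  have "inj g"
  proof (rule injI)
    fix x y assume "g x = g y"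
    moreover have "det A \<noteq> 0" using A by (simp add: invertible_det_nz)
    ultimately have "transpose A *v (matrix_inv (transpose A) *v x) = transpose A *v (matrix_inv (transpose A) *v y)"
      by (simp add: g_def)
    then show "x = y"
      by (simp only: matrix_inv_vector_mul(1)[OF transpose_invertible[OF A]])
  qed
  then have "interior (g ` L) \<noteq> {}"
    using interior_injective_linear_image[OF lin] L(3) by simp
  moreover have "is_j_projection_body j ((\<lambda>x. A *v x) ` K) (g ` L)"
    unfolding g_def
    using is_j_projection_body_linear_image[OF A j _ _ L(4)] K(1) L(1) by (simp add: convex_body_def)
  ultimately show ?thesis
    using K L lin unfolding j_projection_bodies_def
    by (auto intro!: convex_body_linear_image origin_symmetric_linear_image)
qed

lemma j_projection_class_linear_image:
  fixes A :: "real^'n^'n"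
  assumes A: "invertible A" and j: "j < CARD('n)" and C: "C \<in> j_projection_class j"
  shows "(\<lambda>x. A *v x) ` C \<in> j_projection_class j"
proof -
  obtain X where C: "compact C" "C \<noteq> {}" and X: "\<And>i. X i \<in> j_projection_bodies j"
    and lim: "(\<lambda>i. hausdorff_dist (X i) C) \<longlonglongrightarrow> 0"
    using C unfolding j_projection_class_eq by blast
  have lin: "linear (\<lambda>x. A *v x)" by simp
  obtain B where B: "0 < B" "\<And>x. norm (A *v x) \<le> B * norm x"
    using linear_bounded_pos[OF lin] by blast
  have cX: "compact (X i)" "X i \<noteq> {}" for i
    using X[of i] by (auto simp: j_projection_bodies_def convex_body_def)
  have "(\<lambda>i. hausdorff_dist ((\<lambda>x. A *v x) ` X i) ((\<lambda>x. A *v x) ` C)) \<longlonglongrightarrow> 0"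
  proof (rule Lim_null_comparison)
    show "\<forall>\<^sub>F i in sequentially. norm (hausdorff_dist ((\<lambda>x. A *v x) ` X i) ((\<lambda>x. A *v x) ` C))
             \<le> B * hausdorff_dist (X i) C"
      using hausdorff_dist_nonneg[OF compact_linear_image[OF lin cX(1)]] cX(2) C(2)
        hausdorff_dist_linear_image_le[OF lin B cX C]
      by (intro always_eventually allI) simp
    show "(\<lambda>i. B * hausdorff_dist (X i) C) \<longlonglongrightarrow> 0"
      using tendsto_mult_right_zero[OF lim] .
  qed
  with C j_projection_bodies_linear_image[OF A j X] show ?thesis
    unfolding j_projection_class_eq
    by (intro CollectI conjI exI[of _ "\<lambda>i. (\<lambda>x. A *v x) ` X i"] compact_linear_image[OF lin]) auto
qed

theorem theorem5p1:
  fixes A :: "real^'n^'n" and K L :: "(real^'n) set" and j :: nat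
  assumes "CARD('n) \<ge> 3"
    and "1 \<le> j" and "j \<le> CARD('n) - 1"
    and "invertible A"
    and "convex_body K" and "origin_symmetric K" and "interior K \<noteq> {}"
    and "convex_body L" and "origin_symmetric L" and "interior L \<noteq> {}"
    and "is_j_projection_body j K L"
  shows "is_j_projection_body j ((\<lambda>x. A *v x) ` K)
           ((\<lambda>x. (\<bar>det A\<bar> powr (1 / real (CARD('n) - j))) *\<^sub>R (matrix_inv (transpose A) *v x)) ` L)
         \<and> (\<forall>C \<in> j_projection_class j. (\<lambda>x. A *v x) ` C \<in> j_projection_class j)"
proof -
  have j: "j < CARD('n)" using assms(1,3) by simp
  show ?thesis
    using is_j_projection_body_linear_image[OF assms(4) j _ _ assms(11)] assms(5,8)
      j_projection_class_linear_image[OF assms(4) j]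
    by (auto simp: convex_body_def)
qed

end
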